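(* For all well-typed terms $\Gamma\vdash t:A$ and $\Gamma\vdash u:A$ of $\lambda^{SJ}$: $\Gamma\vdash t\equiv u:A$ holds in $\lambda^{SJ}$ if and only if $[\![t]\!]=[\![u]\!]:[\![\Gamma]\!]\to[\![A]\!]$ in every categorical model of $\lambda^{SJ}$ (every cartesian closed category with a strong semimonad, for every interpretation of the base type).
   Context: Types: $A,B ::= \iota \mid 1 \mid A\times B \mid A\to B \mid \Diamond A$, where $\iota$ is a base type. A context $\Gamma$ is a list $x_1:A_1,\dots,x_n:A_n$ of distinct variables. Terms of the simply typed part: variables, $()$, $\langle t,u\rangle$, $\mathsf{fst}\,t$, $\mathsf{snd}\,t$, $\lambda x.t$, $t\,u$, with the standard typing rules. The calculus $\lambda^{SJ}$ adds: (letmap) if $\Gamma\vdash t:\Diamond A$ and $\Gamma,x:A\vdash u:B$ then $\Gamma\vdash \mathsf{letmap}\ x=t\ \mathsf{in}\ u:\Diamond B$; (let) if $\Gamma\vdash t:\Diamond A$ and $\Gamma,x:A\vdash u:\Diamond B$ then $\Gamma\vdash\mathsf{let}\ x=t\ \mathsf{in}\ u:\Diamond B$. Its equational theory $\equiv$ is the least congruence on well-typed terms containing the simply typed $\beta\eta$-laws ($t\equiv()$ for $t:1$; $t\equiv\langle\mathsf{fst}\,t,\mathsf{snd}\,t\rangle$; $\mathsf{fst}\langle t,u\rangle\equiv t$; $\mathsf{snd}\langle t,u\rangle\equiv u$; $t\equiv\lambda x.\,t\,x$ with $x$ fresh; $(\lambda x.t)\,u\equiv t[u/x]$) and: $t\equiv\mathsf{letmap}\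 x=t\ \mathsf{in}\ x$; $\mathsf{letmap}\ y=(\mathsf{letmap}\ x=t\ \mathsf{in}\ u)\ \mathsf{in}\ u'\equiv\mathsf{letmap}\ x=t\ \mathsf{in}\ u'[u/y]$; $\mathsf{let}\ y=(\mathsf{letmap}\ x=t\ \mathsf{in}\ u)\ \mathsf{in}\ u'\equiv\mathsf{let}\ x=t\ \mathsf{in}\ u'[u/y]$; $\mathsf{letmap}\ y=(\mathsf{let}\ x=t\ \mathsf{in}\ u)\ \mathsf{in}\ u'\equiv\mathsf{let}\ x=t\ \mathsf{in}\ (\mathsf{letmap}\ y=u\ \mathsf{in}\ u')$; $\mathsf{let}\ y=(\mathsf{let}\ x=t\ \mathsf{in}\ u)\ \mathsf{in}\ u'\equiv\mathsf{let}\ x=t\ \mathsf{in}\ (\mathsf{let}\ y=u\ \mathsf{in}\ u')$ (terms implicitly weakened where needed). A categorical model of $\lambda^{SJ}$ is a cartesian closed category $\mathcal C$ with an endofunctor $D$, a strength $\mathrm{st}_{X,Y}:X\times DY\to D(X\times Y)$ (natural, with $D\pi_2\circ\mathrm{st}_{1,X}=\pi_2$ and $D\alpha\circ\mathrm{st}_{X\times Y,Z}=\mathrm{st}_{X,Y\times Z}\circ(\mathrm{id}\times\mathrm{st}_{Y,Z})\circ\alpha$), and a natural transformation $\mu:DD\Rightarrow D$ that is associative ($\mu_X\circ\mu_{DX}=\mu_X\circ D\mu_X$) and strong ($\mu_{X\times Y}\circ D\mathrm{st}_{X,Y}\circ\mathrm{st}_{X,DY}=\mathrm{st}_{X,Y}\circ(\mathrm{id}_X\times\mu_Y)$).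 Given an object interpreting $\iota$, types/contexts/simply typed terms are interpreted in the standard cartesian closed way with $[\![\Diamond A]\!]=D[\![A]\!]$, $[\![\mathsf{letmap}\ x=t\ \mathsf{in}\ u]\!]=D[\![u]\!]\circ\mathrm{st}\circ\langle\mathrm{id},[\![t]\!]\rangle$ and $[\![\mathsf{let}\ x=t\ \mathsf{in}\ u]\!]=\mu\circ D[\![u]\!]\circ\mathrm{st}\circ\langle\mathrm{id},[\![t]\!]\rangle$. *)

theory Defs
  imports Main
begin

datatype ty = TyBase | TyUnit | TyProd ty ty | TyArr ty ty | TyDia ty

datatype tm =
    TVar nat | TUnit | TPair tm tm | TFst tm | TSnd tm
  | TLam ty tm | TApp tm tm
  | TLetmap tm tm   \<comment> \<open>letmap x = t in u ; x is bound (index 0) in u\<close>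
  | TLet tm tm      \<comment> \<open>let x = t in u ; x is bound (index 0) in u\<close>

fun lift :: "nat \<Rightarrow> tm \<Rightarrow> tm" where
  "lift k (TVar i) = (if i < k then TVar i else TVar (Suc i))"
| "lift k TUnit = TUnit"
| "lift k (TPair t u) = TPair (lift k t) (lift k u)"
| "lift k (TFst t) = TFst (lift k t)"
| "lift k (TSnd t) = TSnd (lift k t)"
| "lift k (TLam A t) = TLam A (lift (Suc k) t)"
| "lift k (TApp t u) = TApp (lift k t) (lift k u)"
| "lift k (TLetmap t u) = TLetmap (lift k t) (lift (Suc k) u)"
| "lift k (TLet t u) = TLet (lift k t) (lift (Suc k) u)"

fun subst :: "nat \<Rightarrow> tm \<Rightarrow> tm \<Rightarrow> tm" where
  "subst k s (TVar i) = (if i < k then TVar i else if i = k then s else TVar (i - 1))"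
| "subst k s TUnit = TUnit"
| "subst k s (TPair t u) = TPair (subst k s t) (subst k s u)"
| "subst k s (TFst t) = TFst (subst k s t)"
| "subst k s (TSnd t) = TSnd (subst k s t)"
| "subst k s (TLam A t) = TLam A (subst (Suc k) (lift 0 s) t)"
| "subst k s (TApp t u) = TApp (subst k s t) (subst k s u)"
| "subst k s (TLetmap t u) = TLetmap (subst k s t) (subst (Suc k) (lift 0 s) u)"
| "subst k s (TLet t u) = TLet (subst k s t) (subst (Suc k) (lift 0 s) u)"

text \<open>Contexts: lists of types; index 0 is the most recently bound variable,
  so the context Gamma, x:A is written A # Gamma.\<close>
inductive typing :: "ty list \<Rightarrow> tm \<Rightarrow> ty \<Rightarrow> bool" where
  ty_var: "i < length \<Gamma> \<Longrightarrow> typing \<Gamma> (TVar i) (\<Gamma> ! i)"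
| ty_unit: "typing \<Gamma> TUnit TyUnit"
| ty_pair: "typing \<Gamma> t A \<Longrightarrow> typing \<Gamma> u B \<Longrightarrow> typing \<Gamma> (TPair t u) (TyProd A B)"
| ty_fst: "typing \<Gamma> t (TyProd A B) \<Longrightarrow> typing \<Gamma> (TFst t) A"
| ty_snd: "typing \<Gamma> t (TyProd A B) \<Longrightarrow> typing \<Gamma> (TSnd t) B"
| ty_lam: "typing (A # \<Gamma>) t B \<Longrightarrow> typing \<Gamma> (TLam A t) (TyArr A B)"
| ty_app: "typing \<Gamma> t (TyArr A B) \<Longrightarrow> typing \<Gamma> u A \<Longrightarrow> typing \<Gamma> (TApp t u) B"
| ty_letmap: "typing \<Gamma> t (TyDia A) \<Longrightarrow> typing (A # \<Gamma>) u B \<Longrightarrow> typing \<Gamma> (TLetmap t u) (TyDia B)"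
| ty_let: "typing \<Gamma> t (TyDia A) \<Longrightarrow> typing (A # \<Gamma>) u (TyDia B) \<Longrightarrow> typing \<Gamma> (TLet t u) (TyDia B)"

inductive eqv :: "ty list \<Rightarrow> tm \<Rightarrow> tm \<Rightarrow> ty \<Rightarrow> bool" where
  eq_refl: "typing \<Gamma> t A \<Longrightarrow> eqv \<Gamma> t t A"
| eq_sym: "eqv \<Gamma> t u A \<Longrightarrow> eqv \<Gamma> u t A"
| eq_trans: "eqv \<Gamma> t u A \<Longrightarrow> eqv \<Gamma> u v A \<Longrightarrow> eqv \<Gamma> t v A"
| cg_pair: "eqv \<Gamma> t t' A \<Longrightarrow> eqv \<Gamma> u u' B \<Longrightarrow> eqv \<Gamma> (TPair t u) (TPair t' u') (TyProd A B)"
| cg_fst: "eqv \<Gamma> t t' (TyProd A B) \<Longrightarrow> eqv \<Gamma> (TFst t) (TFst t') A"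
| cg_snd: "eqv \<Gamma> t t' (TyProd A B) \<Longrightarrow> eqv \<Gamma> (TSnd t) (TSnd t') B"
| cg_lam: "eqv (A # \<Gamma>) t t' B \<Longrightarrow> eqv \<Gamma> (TLam A t) (TLam A t') (TyArr A B)"
| cg_app: "eqv \<Gamma> t t' (TyArr A B) \<Longrightarrow> eqv \<Gamma> u u' A \<Longrightarrow> eqv \<Gamma> (TApp t u) (TApp t' u') B"
| cg_letmap: "eqv \<Gamma> t t' (TyDia A) \<Longrightarrow> eqv (A # \<Gamma>) u u' B
    \<Longrightarrow> eqv \<Gamma> (TLetmap t u) (TLetmap t' u') (TyDia B)"
| cg_let: "eqv \<Gamma> t t' (TyDia A) \<Longrightarrow> eqv (A # \<Gamma>) u u' (TyDia B)
    \<Longrightarrow> eqv \<Gamma> (TLet t u) (TLet t' u') (TyDia B)"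
| ax_unit_eta: "typing \<Gamma> t TyUnit \<Longrightarrow> eqv \<Gamma> t TUnit TyUnit"
| ax_pair_eta: "typing \<Gamma> t (TyProd A B) \<Longrightarrow> eqv \<Gamma> t (TPair (TFst t) (TSnd t)) (TyProd A B)"
| ax_fst_beta: "typing \<Gamma> t A \<Longrightarrow> typing \<Gamma> u B \<Longrightarrow> eqv \<Gamma> (TFst (TPair t u)) t A"
| ax_snd_beta: "typing \<Gamma> t A \<Longrightarrow> typing \<Gamma> u B \<Longrightarrow> eqv \<Gamma> (TSnd (TPair t u)) u B"
| ax_fun_eta: "typing \<Gamma> t (TyArr A B) \<Longrightarrow>
    eqv \<Gamma> t (TLam A (TApp (lift 0 t) (TVar 0))) (TyArr A B)"
| ax_fun_beta: "typing (A # \<Gamma>) t B \<Longrightarrow> typing \<Gamma> u A \<Longrightarrow>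
    eqv \<Gamma> (TApp (TLam A t) u) (subst 0 u t) B"
| ax_letmap_id: "typing \<Gamma> t (TyDia A) \<Longrightarrow> eqv \<Gamma> t (TLetmap t (TVar 0)) (TyDia A)"
| ax_letmap_letmap: "typing \<Gamma> t (TyDia A) \<Longrightarrow> typing (A # \<Gamma>) u B \<Longrightarrow> typing (B # \<Gamma>) u' C \<Longrightarrow>
    eqv \<Gamma> (TLetmap (TLetmap t u) u') (TLetmap t (subst 0 u (lift 1 u'))) (TyDia C)"
| ax_let_letmap: "typing \<Gamma> t (TyDia A) \<Longrightarrow> typing (A # \<Gamma>) u B \<Longrightarrow> typing (B # \<Gamma>) u' (TyDia C) \<Longrightarrow>
    eqv \<Gamma> (TLet (TLetmap t u) u') (TLet t (subst 0 u (lift 1 u'))) (TyDia C)"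
| ax_letmap_let: "typing \<Gamma> t (TyDia A) \<Longrightarrow> typing (A # \<Gamma>) u (TyDia B) \<Longrightarrow> typing (B # \<Gamma>) u' C \<Longrightarrow>
    eqv \<Gamma> (TLetmap (TLet t u) u') (TLet t (TLetmap u (lift 1 u'))) (TyDia C)"
| ax_let_let: "typing \<Gamma> t (TyDia A) \<Longrightarrow> typing (A # \<Gamma>) u (TyDia B) \<Longrightarrow> typing (B # \<Gamma>) u' (TyDia C) \<Longrightarrow>
    eqv \<Gamma> (TLet (TLet t u) u') (TLet t (TLet u (lift 1 u'))) (TyDia C)"

text \<open>A category presented by objects, arrows, domain/codomain, identities and
  composition (cmp g f = g o f), with chosen terminal object, binary products,
  exponentials (expo X Y = Y^X, evl X Y : Y^X x X -> Y, cur Z X f : Z -> Y^X for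
  f : Z x X -> Y), an endofunctor D (Dob, Dar), a strength st and a multiplication mu.\<close>
record ('o, 'm) sj_model =
  Ob :: "'o set"
  Ar :: "'m set"
  sdom :: "'m \<Rightarrow> 'o"
  scod :: "'m \<Rightarrow> 'o"
  idm :: "'o \<Rightarrow> 'm"
  cmp :: "'m \<Rightarrow> 'm \<Rightarrow> 'm"
  trm :: "'o"
  bang :: "'o \<Rightarrow> 'm"
  prd :: "'o \<Rightarrow> 'o \<Rightarrow> 'o"
  pi1 :: "'o \<Rightarrow> 'o \<Rightarrow> 'm"
  pi2 :: "'o \<Rightarrow> 'o \<Rightarrow> 'm"
  tup :: "'m \<Rightarrow> 'm \<Rightarrow> 'm"
  expo :: "'o \<Rightarrow> 'o \<Rightarrow> 'o"
  evl :: "'o \<Rightarrow> 'o \<Rightarrow> 'm"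
  cur :: "'o \<Rightarrow> 'o \<Rightarrow> 'm \<Rightarrow> 'm"
  Dob :: "'o \<Rightarrow> 'o"
  Dar :: "'m \<Rightarrow> 'm"
  st :: "'o \<Rightarrow> 'o \<Rightarrow> 'm"
  mu :: "'o \<Rightarrow> 'm"

definition hom :: "('o, 'm) sj_model \<Rightarrow> 'o \<Rightarrow> 'o \<Rightarrow> 'm set" where
  "hom M A B = {f \<in> Ar M. sdom M f = A \<and> scod M f = B}"

definition parr :: "('o, 'm) sj_model \<Rightarrow> 'o \<Rightarrow> 'o \<Rightarrow> 'm \<Rightarrow> 'm \<Rightarrow> 'm" where
  "parr M A B f g = tup M (cmp M f (pi1 M A B)) (cmp M g (pi2 M A B))"

definition alpha :: "('o, 'm) sj_model \<Rightarrow> 'o \<Rightarrow> 'o \<Rightarrow> 'o \<Rightarrow> 'm" where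
  "alpha M X Y Z =
     tup M (cmp M (pi1 M X Y) (pi1 M (prd M X Y) Z))
           (tup M (cmp M (pi2 M X Y) (pi1 M (prd M X Y) Z)) (pi2 M (prd M X Y) Z))"

definition is_category :: "('o, 'm) sj_model \<Rightarrow> bool" where
  "is_category M \<longleftrightarrow>
     (\<forall>f\<in>Ar M. sdom M f \<in> Ob M \<and> scod M f \<in> Ob M) \<and>
     (\<forall>A\<in>Ob M. idm M A \<in> hom M A A) \<and>
     (\<forall>A B C f g. f \<in> hom M A B \<longrightarrow> g \<in> hom M B C \<longrightarrow> cmp M g f \<in> hom M A C) \<and>
     (\<forall>A B f. f \<in> hom M A B \<longrightarrow> cmp M f (idm M A) = f \<and> cmp M (idm M B) f = f) \<and>
     (\<forall>A B C D f g h. f \<in> hom M A B \<longrightarrow> g \<in> hom M B C \<longrightarrow> h \<in> hom M C D \<longrightarrow>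
        cmp M h (cmp M g f) = cmp M (cmp M h g) f)"

definition has_terminal :: "('o, 'm) sj_model \<Rightarrow> bool" where
  "has_terminal M \<longleftrightarrow> trm M \<in> Ob M \<and>
     (\<forall>A\<in>Ob M. bang M A \<in> hom M A (trm M) \<and> (\<forall>f\<in>hom M A (trm M). f = bang M A))"

definition has_products :: "('o, 'm) sj_model \<Rightarrow> bool" where
  "has_products M \<longleftrightarrow>
     (\<forall>A\<in>Ob M. \<forall>B\<in>Ob M.
        prd M A B \<in> Ob M \<and>
        pi1 M A B \<in> hom M (prd M A B) A \<and> pi2 M A B \<in> hom M (prd M A B) B \<and>
        (\<forall>C f g. f \<in> hom M C A \<longrightarrow> g \<in> hom M C B \<longrightarrow>
           tup M f g \<in> hom M C (prd M A B) \<and>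
           cmp M (pi1 M A B) (tup M f g) = f \<and> cmp M (pi2 M A B) (tup M f g) = g) \<and>
        (\<forall>C h. h \<in> hom M C (prd M A B) \<longrightarrow>
           h = tup M (cmp M (pi1 M A B) h) (cmp M (pi2 M A B) h)))"

definition has_exponentials :: "('o, 'm) sj_model \<Rightarrow> bool" where
  "has_exponentials M \<longleftrightarrow>
     (\<forall>X\<in>Ob M. \<forall>Y\<in>Ob M.
        expo M X Y \<in> Ob M \<and>
        evl M X Y \<in> hom M (prd M (expo M X Y) X) Y \<and>
        (\<forall>Z\<in>Ob M.
           (\<forall>f\<in>hom M (prd M Z X) Y.
              cur M Z X f \<in> hom M Z (expo M X Y) \<and>
              cmp M (evl M X Y) (parr M Z X (cur M Z X f) (idm M X)) = f) \<and>
           (\<forall>h\<in>hom M Z (expo M X Y).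
              cur M Z X (cmp M (evl M X Y) (parr M Z X h (idm M X))) = h)))"

definition is_endofunctor :: "('o, 'm) sj_model \<Rightarrow> bool" where
  "is_endofunctor M \<longleftrightarrow>
     (\<forall>A\<in>Ob M. Dob M A \<in> Ob M \<and> Dar M (idm M A) = idm M (Dob M A)) \<and>
     (\<forall>A B f. f \<in> hom M A B \<longrightarrow> Dar M f \<in> hom M (Dob M A) (Dob M B)) \<and>
     (\<forall>A B C f g. f \<in> hom M A B \<longrightarrow> g \<in> hom M B C \<longrightarrow>
        Dar M (cmp M g f) = cmp M (Dar M g) (Dar M f))"

definition is_strength :: "('o, 'm) sj_model \<Rightarrow> bool" where
  "is_strength M \<longleftrightarrow>
     (\<forall>X\<in>Ob M. \<forall>Y\<in>Ob M. st M X Y \<in> hom M (prd M X (Dob M Y)) (Dob M (prd M X Y))) \<and>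
     (\<forall>X X' Y Y' f g. f \<in> hom M X X' \<longrightarrow> g \<in> hom M Y Y' \<longrightarrow>
        cmp M (st M X' Y') (parr M X (Dob M Y) f (Dar M g))
        = cmp M (Dar M (parr M X Y f g)) (st M X Y)) \<and>
     (\<forall>X\<in>Ob M. cmp M (Dar M (pi2 M (trm M) X)) (st M (trm M) X) = pi2 M (trm M) (Dob M X)) \<and>
     (\<forall>X\<in>Ob M. \<forall>Y\<in>Ob M. \<forall>Z\<in>Ob M.
        cmp M (Dar M (alpha M X Y Z)) (st M (prd M X Y) Z)
        = cmp M (st M X (prd M Y Z))
            (cmp M (parr M X (prd M Y (Dob M Z)) (idm M X) (st M Y Z)) (alpha M X Y (Dob M Z))))"

definition is_strong_semimonad_mult :: "('o, 'm) sj_model \<Rightarrow> bool" where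
  "is_strong_semimonad_mult M \<longleftrightarrow>
     (\<forall>X\<in>Ob M. mu M X \<in> hom M (Dob M (Dob M X)) (Dob M X)) \<and>
     (\<forall>X Y f. f \<in> hom M X Y \<longrightarrow> cmp M (mu M Y) (Dar M (Dar M f)) = cmp M (Dar M f) (mu M X)) \<and>
     (\<forall>X\<in>Ob M. cmp M (mu M X) (mu M (Dob M X)) = cmp M (mu M X) (Dar M (mu M X))) \<and>
     (\<forall>X\<in>Ob M. \<forall>Y\<in>Ob M.
        cmp M (mu M (prd M X Y)) (cmp M (Dar M (st M X Y)) (st M X (Dob M Y)))
        = cmp M (st M X Y) (parr M X (Dob M (Dob M Y)) (idm M X) (mu M Y)))"

definition is_sj_model :: "('o, 'm) sj_model \<Rightarrow> bool" where
  "is_sj_model M \<longleftrightarrow> is_category M \<and> has_terminal M \<and> has_products M \<and>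
     has_exponentials M \<and> is_endofunctor M \<and> is_strength M \<and> is_strong_semimonad_mult M"

fun ty_obj :: "('o, 'm) sj_model \<Rightarrow> 'o \<Rightarrow> ty \<Rightarrow> 'o" where
  "ty_obj M \<iota> TyBase = \<iota>"
| "ty_obj M \<iota> TyUnit = trm M"
| "ty_obj M \<iota> (TyProd A B) = prd M (ty_obj M \<iota> A) (ty_obj M \<iota> B)"
| "ty_obj M \<iota> (TyArr A B) = expo M (ty_obj M \<iota> A) (ty_obj M \<iota> B)"
| "ty_obj M \<iota> (TyDia A) = Dob M (ty_obj M \<iota> A)"

fun ctx_obj :: "('o, 'm) sj_model \<Rightarrow> 'o \<Rightarrow> ty list \<Rightarrow> 'o" where
  "ctx_obj M \<iota> [] = trm M"
| "ctx_obj M \<iota> (A # \<Gamma>) = prd M (ctx_obj M \<iota> \<Gamma>) (ty_obj M \<iota> A)"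

fun var_sem :: "('o, 'm) sj_model \<Rightarrow> 'o \<Rightarrow> ty list \<Rightarrow> nat \<Rightarrow> 'm" where
  "var_sem M \<iota> (A # \<Gamma>) 0 = pi2 M (ctx_obj M \<iota> \<Gamma>) (ty_obj M \<iota> A)"
| "var_sem M \<iota> (A # \<Gamma>) (Suc i) = cmp M (var_sem M \<iota> \<Gamma> i) (pi1 M (ctx_obj M \<iota> \<Gamma>) (ty_obj M \<iota> A))"
| "var_sem M \<iota> [] i = undefined"

definition tyof :: "ty list \<Rightarrow> tm \<Rightarrow> ty" where
  "tyof \<Gamma> t = (THE A. typing \<Gamma> t A)"

fun prod_l :: "ty \<Rightarrow> ty" where "prod_l (TyProd A B) = A"
fun prod_r :: "ty \<Rightarrow> ty" where "prod_r (TyProd A B) = B"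
fun arr_dom :: "ty \<Rightarrow> ty" where "arr_dom (TyArr A B) = A"
fun arr_cod :: "ty \<Rightarrow> ty" where "arr_cod (TyArr A B) = B"
fun dia_arg :: "ty \<Rightarrow> ty" where "dia_arg (TyDia A) = A"

fun sem :: "('o, 'm) sj_model \<Rightarrow> 'o \<Rightarrow> ty list \<Rightarrow> tm \<Rightarrow> 'm" where
  "sem M \<iota> \<Gamma> (TVar i) = var_sem M \<iota> \<Gamma> i"
| "sem M \<iota> \<Gamma> TUnit = bang M (ctx_obj M \<iota> \<Gamma>)"
| "sem M \<iota> \<Gamma> (TPair t u) = tup M (sem M \<iota> \<Gamma> t) (sem M \<iota> \<Gamma> u)"
| "sem M \<iota> \<Gamma> (TFst t) =
     cmp M (pi1 M (ty_obj M \<iota> (prod_l (tyof \<Gamma> t))) (ty_obj M \<iota> (prod_r (tyof \<Gamma> t)))) (sem M \<iota> \<Gamma> t)"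
| "sem M \<iota> \<Gamma> (TSnd t) =
     cmp M (pi2 M (ty_obj M \<iota> (prod_l (tyof \<Gamma> t))) (ty_obj M \<iota> (prod_r (tyof \<Gamma> t)))) (sem M \<iota> \<Gamma> t)"
| "sem M \<iota> \<Gamma> (TLam A t) = cur M (ctx_obj M \<iota> \<Gamma>) (ty_obj M \<iota> A) (sem M \<iota> (A # \<Gamma>) t)"
| "sem M \<iota> \<Gamma> (TApp t u) =
     cmp M (evl M (ty_obj M \<iota> (arr_dom (tyof \<Gamma> t))) (ty_obj M \<iota> (arr_cod (tyof \<Gamma> t))))
       (tup M (sem M \<iota> \<Gamma> t) (sem M \<iota> \<Gamma> u))"
| "sem M \<iota> \<Gamma> (TLetmap t u) =
     (let A = dia_arg (tyof \<Gamma> t) in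
      cmp M (Dar M (sem M \<iota> (A # \<Gamma>) u))
        (cmp M (st M (ctx_obj M \<iota> \<Gamma>) (ty_obj M \<iota> A))
           (tup M (idm M (ctx_obj M \<iota> \<Gamma>)) (sem M \<iota> \<Gamma> t))))"
| "sem M \<iota> \<Gamma> (TLet t u) =
     (let A = dia_arg (tyof \<Gamma> t); B = dia_arg (tyof (A # \<Gamma>) u) in
      cmp M (mu M (ty_obj M \<iota> B))
        (cmp M (Dar M (sem M \<iota> (A # \<Gamma>) u))
          (cmp M (st M (ctx_obj M \<iota> \<Gamma>) (ty_obj M \<iota> A))
             (tup M (idm M (ctx_obj M \<iota> \<Gamma>)) (sem M \<iota> \<Gamma> t)))))"

end

theory Submission
  imports Defs "HOL-Library.Countable"
begin

text \<open>The interpretation of a substituted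
  term is the interpretation of the term precomposed with that of the substitution, so the
  \<open>\<beta>\<eta>\<close>-laws become the universal properties of products and exponentials, and the four commuting
  conversions follow from naturality and associativity of \<open>\<mu>\<close> and the laws of the strength,
  stated once and for all for the strong map \<open>D u \<circ> st \<circ> \<langle>id, t\<rangle>\<close>.

  Completeness uses the term model: types as objects and terms \<open>x : A \<turnstile> t : B\<close> modulo
  \<open>\<equiv>\<close> as arrows. A context is interpreted there as the product of its types, and the
  interpretation of \<open>\<Gamma> \<turnstile> t\<close> is \<open>t\<close> with its variables replaced by projections; substituting
  the tuple of variables back recovers \<open>t\<close> up to \<open>\<equiv>\<close>. Hence equal interpretations in the
  term model force \<open>t \<equiv> u\<close>.\<close>

section \<open>Typing and substitution\<close>

inductive_cases typing_elims:
  "typing G (TVar i) A" "typing G TUnit A" "typing G (TPair t u) A" "typing G (TFst t) A"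
  "typing G (TSnd t) A" "typing G (TLam B t) A" "typing G (TApp t u) A"
  "typing G (TLetmap t u) A" "typing G (TLet t u) A"

inductive_simps typing_simps:
  "typing G (TVar i) A" "typing G TUnit A" "typing G (TPair t u) A" "typing G (TFst t) A"
  "typing G (TSnd t) A" "typing G (TLam B t) A" "typing G (TApp t u) A"
  "typing G (TLetmap t u) A" "typing G (TLet t u) A"

lemma typing_unique: "typing G t A \<Longrightarrow> typing G t B \<Longrightarrow> A = B"
  by (induction arbitrary: B rule: typing.induct) (blast elim: typing_elims)+

lemma tyof_eq: "typing G t A \<Longrightarrow> tyof G t = A"
  unfolding tyof_def using typing_unique by blast

definition up_ren :: "(nat \<Rightarrow> nat) \<Rightarrow> nat \<Rightarrow> nat" where
  "up_ren r i = (case i of 0 \<Rightarrow> 0 | Suc j \<Rightarrow> Suc (r j))"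

fun ren :: "(nat \<Rightarrow> nat) \<Rightarrow> tm \<Rightarrow> tm" where
  "ren r (TVar i) = TVar (r i)"
| "ren r TUnit = TUnit"
| "ren r (TPair t u) = TPair (ren r t) (ren r u)"
| "ren r (TFst t) = TFst (ren r t)"
| "ren r (TSnd t) = TSnd (ren r t)"
| "ren r (TLam A t) = TLam A (ren (up_ren r) t)"
| "ren r (TApp t u) = TApp (ren r t) (ren r u)"
| "ren r (TLetmap t u) = TLetmap (ren r t) (ren (up_ren r) u)"
| "ren r (TLet t u) = TLet (ren r t) (ren (up_ren r) u)"

definition up_subst :: "(nat \<Rightarrow> tm) \<Rightarrow> nat \<Rightarrow> tm" where
  "up_subst s i = (case i of 0 \<Rightarrow> TVar 0 | Suc j \<Rightarrow> ren Suc (s j))"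

fun msubst :: "(nat \<Rightarrow> tm) \<Rightarrow> tm \<Rightarrow> tm" where
  "msubst s (TVar i) = s i"
| "msubst s TUnit = TUnit"
| "msubst s (TPair t u) = TPair (msubst s t) (msubst s u)"
| "msubst s (TFst t) = TFst (msubst s t)"
| "msubst s (TSnd t) = TSnd (msubst s t)"
| "msubst s (TLam A t) = TLam A (msubst (up_subst s) t)"
| "msubst s (TApp t u) = TApp (msubst s t) (msubst s u)"
| "msubst s (TLetmap t u) = TLetmap (msubst s t) (msubst (up_subst s) u)"
| "msubst s (TLet t u) = TLet (msubst s t) (msubst (up_subst s) u)"

lemma up_ren_simps [simp]: "up_ren r 0 = 0" "up_ren r (Suc j) = Suc (r j)"
  by (simp_all add: up_ren_def)

lemma up_subst_simps [simp]: "up_subst s 0 = TVar 0" "up_subst s (Suc j) = ren Suc (s j)"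
  by (simp_all add: up_subst_def)

lemma ren_ren: "ren r (ren r' t) = ren (r \<circ> r') t"
proof -
  have "up_ren (r \<circ> r') = up_ren r \<circ> up_ren r'" for r r'
    by (auto simp: up_ren_def fun_eq_iff split: nat.split)
  then show ?thesis by (induction t arbitrary: r r') simp_all
qed

lemma msubst_ren: "msubst s (ren r t) = msubst (s \<circ> r) t"
proof -
  have "up_subst (s \<circ> r) = up_subst s \<circ> up_ren r" for s r
    by (auto simp: up_subst_def up_ren_def fun_eq_iff split: nat.split)
  then show ?thesis by (induction t arbitrary: s r) simp_all
qed

lemma ren_msubst: "ren r (msubst s t) = msubst (ren r \<circ> s) t"
proof -
  have "ren (up_ren r) \<circ> up_subst s = up_subst (ren r \<circ> s)" for r s
    by (auto simp: fun_eq_iff up_subst_def ren_ren comp_def split: nat.split)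
  then show ?thesis by (induction t arbitrary: s r) simp_all
qed

lemma msubst_msubst: "msubst s (msubst s' t) = msubst (\<lambda>i. msubst s (s' i)) t"
proof -
  have "up_subst (\<lambda>i. msubst s (s' i)) = (\<lambda>i. msubst (up_subst s) (up_subst s' i))" for s s'
    by (auto simp: fun_eq_iff up_subst_def msubst_ren ren_msubst comp_def split: nat.split)
  then show ?thesis by (induction t arbitrary: s s') simp_all
qed

lemma msubst_TVar [simp]: "msubst TVar t = t"
proof -
  have "up_subst TVar = TVar" by (auto simp: fun_eq_iff up_subst_def split: nat.split)
  then show ?thesis by (induction t) simp_all
qed

lemma ren_eq_msubst: "ren r t = msubst (TVar \<circ> r) t"
proof -
  have "up_subst (TVar \<circ> r) = TVar \<circ> up_ren r" for r
    by (auto simp: fun_eq_iff up_subst_def split: nat.split)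
  then show ?thesis by (induction t arbitrary: r) simp_all
qed

definition lift_var :: "nat \<Rightarrow> nat \<Rightarrow> nat" where
  "lift_var k i = (if i < k then i else Suc i)"

lemma lift_eq_ren: "lift k t = ren (lift_var k) t"
proof -
  have "up_ren (lift_var k) = lift_var (Suc k)" for k
    by (auto simp: fun_eq_iff lift_var_def up_ren_def split: nat.split)
  then show ?thesis by (induction t arbitrary: k) (simp_all add: lift_var_def)
qed

lemma lift0_eq_ren: "lift 0 t = ren Suc t"
proof -
  have "lift_var 0 = Suc" by (simp add: fun_eq_iff lift_var_def)
  then show ?thesis by (simp add: lift_eq_ren)
qed

definition subst_var :: "nat \<Rightarrow> tm \<Rightarrow> nat \<Rightarrow> tm" where
  "subst_var k s i = (if i < k then TVar i else if i = k then s else TVar (i - 1))"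

lemma subst_var0_simps [simp]: "subst_var 0 s 0 = s" "subst_var 0 s (Suc j) = TVar j"
  by (simp_all add: subst_var_def)

lemma subst_eq_msubst: "subst k s t = msubst (subst_var k s) t"
proof -
  have "up_subst (subst_var k s) = subst_var (Suc k) (lift 0 s)" for k s
    by (auto simp: fun_eq_iff subst_var_def up_subst_def lift0_eq_ren split: nat.split)
  then show ?thesis by (induction t arbitrary: k s) (simp_all add: subst_var_def)
qed

lemma msubst_lift0_up: "msubst (up_subst s) (lift 0 t) = lift 0 (msubst s t)"
  by (simp add: lift0_eq_ren msubst_ren ren_msubst comp_def)

lemma msubst_subst0: "msubst s (subst 0 u t) = subst 0 (msubst s u) (msubst (up_subst s) t)"
proof -
  have "msubst s (subst_var 0 u i) = msubst (subst_var 0 (msubst s u)) (up_subst s i)" for i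
    by (cases i) (simp_all add: msubst_ren comp_def)
  then show ?thesis by (simp add: subst_eq_msubst msubst_msubst)
qed

lemma msubst_lift1_up: "msubst (up_subst (up_subst s)) (lift (Suc 0) u)
    = lift (Suc 0) (msubst (up_subst s) u)"
proof -
  have "up_subst (up_subst s) (lift_var 1 i) = ren (lift_var 1) (up_subst s i)" for i
    by (cases i) (simp_all add: lift_var_def ren_ren comp_def)
  then show ?thesis by (simp add: lift_eq_ren msubst_ren ren_msubst comp_def)
qed

lemma up_ren_ctx:
  "\<forall>i<length D. r i < length G \<and> G ! r i = D ! i
      \<Longrightarrow> \<forall>i<length (C # D). up_ren r i < length (C # G) \<and> (C # G) ! up_ren r i = (C # D) ! i"
  by (auto simp: up_ren_def split: nat.split)

lemma typing_ren:
  "typing D t A \<Longrightarrow> \<forall>i<length D. r i < length G \<and> G ! r i = D ! i \<Longrightarrow> typing G (ren r t) A"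
proof (induction arbitrary: G r rule: typing.induct)
  case (ty_var i \<Gamma>)
  then show ?case by (metis ren.simps(1) typing.ty_var)
next
  case (ty_lam A \<Gamma> t B)
  then show ?case using ty_lam.IH[OF up_ren_ctx[OF ty_lam.prems]] by (simp add: typing.ty_lam)
next
  case (ty_letmap \<Gamma> t A u B)
  show ?case unfolding ren.simps
    by (rule typing.ty_letmap[OF ty_letmap.IH(1)[OF ty_letmap.prems]
        ty_letmap.IH(2)[OF up_ren_ctx[OF ty_letmap.prems]]])
next
  case (ty_let \<Gamma> t A u B)
  show ?case unfolding ren.simps
    by (rule typing.ty_let[OF ty_let.IH(1)[OF ty_let.prems]
        ty_let.IH(2)[OF up_ren_ctx[OF ty_let.prems]]])
qed (simp; blast intro: typing.intros)+

lemma typing_weaken: "typing G t A \<Longrightarrow> typing (B # G) (ren Suc t) A"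
  by (erule typing_ren) auto

lemma typing_extend: "typing [B] t A \<Longrightarrow> typing (B # G) t A"
  using typing_ren[of "[B]" t A id "B # G"] by (simp add: ren_eq_msubst)

lemma typing_up_subst:
  "\<forall>i<length D. typing G (s i) (D ! i)
      \<Longrightarrow> \<forall>i<length (C # D). typing (C # G) (up_subst s i) ((C # D) ! i)"
  by (auto simp: up_subst_def typing_weaken typing_simps split: nat.split)

lemma typing_msubst:
  "typing D t A \<Longrightarrow> \<forall>i<length D. typing G (s i) (D ! i) \<Longrightarrow> typing G (msubst s t) A"
proof (induction arbitrary: G s rule: typing.induct)
  case (ty_lam A \<Gamma> t B)
  then show ?case using ty_lam.IH[OF typing_up_subst[OF ty_lam.prems]] by (simp add: typing.ty_lam)
next
  case (ty_letmap \<Gamma> t A u B)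
  show ?case unfolding msubst.simps
    by (rule typing.ty_letmap[OF ty_letmap.IH(1)[OF ty_letmap.prems]
          ty_letmap.IH(2)[OF typing_up_subst[OF ty_letmap.prems]]])
next
  case (ty_let \<Gamma> t A u B)
  show ?case unfolding msubst.simps
    by (rule typing.ty_let[OF ty_let.IH(1)[OF ty_let.prems]
        ty_let.IH(2)[OF typing_up_subst[OF ty_let.prems]]])
qed (simp; blast intro: typing.intros)+

lemma typing_msubst_up:
  "typing (C # D) t A \<Longrightarrow> \<forall>i<length D. typing G (s i) (D ! i)
      \<Longrightarrow> typing (C # G) (msubst (up_subst s) t) A"
  by (erule typing_msubst) (rule typing_up_subst)

lemma typing_msubst_single: "typing [B] t A \<Longrightarrow> typing G (s 0) B \<Longrightarrow> typing G (msubst s t) A"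
  by (erule typing_msubst) simp

lemma typing_lift0: "typing G t A \<Longrightarrow> typing (B # G) (lift 0 t) A"
  by (simp add: lift0_eq_ren typing_weaken)

lemma typing_lift1: "typing (B # G) t A \<Longrightarrow> typing (B # C # G) (lift 1 t) A"
  unfolding lift_eq_ren by (erule typing_ren) (auto simp: lift_var_def nth_Cons split: nat.split)

lemma typing_subst0: "typing (B # G) t A \<Longrightarrow> typing G s B \<Longrightarrow> typing G (subst 0 s t) A"
  unfolding subst_eq_msubst
  by (erule typing_msubst) (auto simp: subst_var_def nth_Cons typing_simps split: nat.split)

lemma typing_TVar0: "typing (C # G) (TVar 0) C"
  using typing.ty_var[of 0 "C # G"] by simp

lemma eqv_typing: "eqv G t u A \<Longrightarrow> typing G t A \<and> typing G u A"
  by (induction rule: eqv.induct)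
     (blast intro: typing.intros typing_TVar0 typing_lift0 typing_lift1 typing_subst0)+

lemma eqv_tyof: "eqv G t u A \<Longrightarrow> tyof G t = A \<and> tyof G u = A"
  using eqv_typing tyof_eq by blast

declare eq_trans [trans]

lemma eqv_msubst:
  "eqv D t t' A \<Longrightarrow> \<forall>i<length D. typing G (s i) (D ! i) \<Longrightarrow> eqv G (msubst s t) (msubst s t') A"
proof (induction arbitrary: G s rule: eqv.induct)
  case (ax_letmap_letmap \<Gamma> t A u B u' C)
  from eqv.ax_letmap_letmap[OF typing_msubst[OF ax_letmap_letmap(1,4)]
      typing_msubst_up[OF ax_letmap_letmap(2,4)] typing_msubst_up[OF ax_letmap_letmap(3,4)]]
  show ?case by (simp add: msubst_subst0 msubst_lift1_up)
next
  case (ax_let_letmap \<Gamma> t A u B u' C)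
  from eqv.ax_let_letmap[OF typing_msubst[OF ax_let_letmap(1,4)]
      typing_msubst_up[OF ax_let_letmap(2,4)] typing_msubst_up[OF ax_let_letmap(3,4)]]
  show ?case by (simp add: msubst_subst0 msubst_lift1_up)
next
  case (ax_letmap_let \<Gamma> t A u B u' C)
  from eqv.ax_letmap_let[OF typing_msubst[OF ax_letmap_let(1,4)]
      typing_msubst_up[OF ax_letmap_let(2,4)] typing_msubst_up[OF ax_letmap_let(3,4)]]
  show ?case by (simp add: msubst_lift1_up)
next
  case (ax_let_let \<Gamma> t A u B u' C)
  from eqv.ax_let_let[OF typing_msubst[OF ax_let_let(1,4)]
      typing_msubst_up[OF ax_let_let(2,4)] typing_msubst_up[OF ax_let_let(3,4)]]
  show ?case by (simp add: msubst_lift1_up)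
next
  case (ax_fun_beta A \<Gamma> t B u)
  from eqv.ax_fun_beta[OF typing_msubst_up[OF ax_fun_beta(1,3)] typing_msubst[OF ax_fun_beta(2,3)]]
  show ?case by (simp add: msubst_subst0)
next
  case (cg_lam A \<Gamma> t t' B)
  then show ?case using cg_lam.IH[OF typing_up_subst[OF cg_lam.prems]] by (simp add: eqv.cg_lam)
next
  case (cg_letmap \<Gamma> t t' A u u' B)
  show ?case unfolding msubst.simps
    by (rule eqv.cg_letmap[OF cg_letmap.IH(1)[OF cg_letmap.prems]
          cg_letmap.IH(2)[OF typing_up_subst[OF cg_letmap.prems]]])
next
  case (cg_let \<Gamma> t t' A u u' B)
  show ?case unfolding msubst.simps
    by (rule eqv.cg_let[OF cg_let.IH(1)[OF cg_let.prems]
        cg_let.IH(2)[OF typing_up_subst[OF cg_let.prems]]])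
next
  case (ax_fun_eta \<Gamma> t A B)
  then show ?case by (simp add: msubst_lift0_up eqv.ax_fun_eta typing_msubst)
next
  case (ax_fst_beta \<Gamma> t A u B)
  then show ?case by (simp, meson eqv.ax_fst_beta typing_msubst)
next
  case (ax_snd_beta \<Gamma> t A u B)
  then show ?case by (simp, meson eqv.ax_snd_beta typing_msubst)
next
  case (eq_refl \<Gamma> t A)
  then show ?case by (simp add: eqv.eq_refl typing_msubst)
next
  case (eq_sym \<Gamma> t u A)
  then show ?case by (simp add: eqv.eq_sym)
next
  case (eq_trans \<Gamma> t u A v)
  then show ?case by (meson eqv.eq_trans)
next
  case (cg_pair \<Gamma> t t' A u u' B)
  then show ?case by (simp add: eqv.cg_pair)
next
  case (cg_fst \<Gamma> t t' A B)
  then show ?case by (simp, meson eqv.cg_fst)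
next
  case (cg_snd \<Gamma> t t' A B)
  then show ?case by (simp, meson eqv.cg_snd)
next
  case (cg_app \<Gamma> t t' A B u u')
  then show ?case by (simp, meson eqv.cg_app)
qed (simp add: eqv.intros typing_msubst)+

lemma eqv_weaken: "eqv G t t' A \<Longrightarrow> eqv (C # G) (ren Suc t) (ren Suc t') A"
  unfolding ren_eq_msubst by (erule eqv_msubst) (simp add: typing_simps)

lemma eqv_up_subst:
  "\<forall>i<length D. eqv G (s i) (s' i) (D ! i) \<Longrightarrow>
   \<forall>i<length (C # D). eqv (C # G) (up_subst s i) (up_subst s' i) ((C # D) ! i)"
  by (auto simp: up_subst_def eqv_weaken typing_TVar0 eq_refl split: nat.split)

lemma eqv_msubst_pointwise:
  "typing D t A \<Longrightarrow> \<forall>i<length D. eqv G (s i) (s' i) (D ! i) \<Longrightarrow> eqv G (msubst s t) (msubst s' t) A"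
proof (induction arbitrary: G s s' rule: typing.induct)
  case (ty_lam A \<Gamma> t B)
  then show ?case using ty_lam.IH[OF eqv_up_subst[OF ty_lam.prems]] by (simp add: cg_lam)
next
  case (ty_letmap \<Gamma> t A u B)
  show ?case unfolding msubst.simps
    by (rule cg_letmap[OF ty_letmap.IH(1)[OF ty_letmap.prems]
        ty_letmap.IH(2)[OF eqv_up_subst[OF ty_letmap.prems]]])
next
  case (ty_let \<Gamma> t A u B)
  show ?case unfolding msubst.simps
    by (rule cg_let[OF ty_let.IH(1)[OF ty_let.prems]
        ty_let.IH(2)[OF eqv_up_subst[OF ty_let.prems]]])
next
  case (ty_app \<Gamma> t A B u)
  then show ?case by (simp, meson cg_app)
next
  case (ty_fst \<Gamma> t A B)
  then show ?case by (simp, meson cg_fst)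
next
  case (ty_snd \<Gamma> t A B)
  then show ?case by (simp, meson cg_snd)
qed (simp_all add: cg_pair eq_refl typing.intros)

lemma eqv_msubst_cong:
  assumes "eqv D t t' A" and "\<forall>i<length D. eqv G (s i) (s' i) (D ! i)"
  shows "eqv G (msubst s t) (msubst s' t') A"
proof (rule eq_trans)
  show "eqv G (msubst s t) (msubst s t') A"
    using assms eqv_msubst eqv_typing by blast
  show "eqv G (msubst s t') (msubst s' t') A"
    using assms eqv_msubst_pointwise eqv_typing by blast
qed

lemma typing_compose: "typing [B] g C \<Longrightarrow> typing G f B \<Longrightarrow> typing G (subst 0 f g) C"
  by (rule typing_subst0[OF typing_extend])

lemma eqv_compose: "eqv [B] g g' C \<Longrightarrow> eqv G f f' B \<Longrightarrow> eqv G (subst 0 f g) (subst 0 f' g') C"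
  unfolding subst_eq_msubst by (erule eqv_msubst_cong) simp

lemma eqv_msubst_single:
  "typing [B] g C \<Longrightarrow> eqv G (s 0) (s' 0) B \<Longrightarrow> eqv G (msubst s g) (msubst s' g) C"
  by (erule eqv_msubst_pointwise) simp

lemma subst0_TVar0_eqv: "typing [A] t B \<Longrightarrow> eqv [A] (subst 0 (TVar 0) t) t B"
  using eqv_msubst_single[of A t B "[A]" "subst_var 0 (TVar 0)" TVar]
  by (simp add: subst_eq_msubst eq_refl typing_simps)

lemma subst0_subst0_eqv:
  assumes t: "typing [A] t B" and u: "typing [B] u C" and v: "typing [C] v D"
  shows "eqv [A] (subst 0 t (subst 0 u v)) (subst 0 (subst 0 t u) v) D"
proof -
  have "subst 0 t (subst 0 u v) = subst 0 (subst 0 t u) (msubst (up_subst (subst_var 0 t)) v)"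
    by (simp add: subst_eq_msubst[of 0 t] msubst_subst0)
  also have "eqv [A] \<dots> (subst 0 (subst 0 t u) v) D"
  proof (rule eqv_compose)
    show "eqv [C] (msubst (up_subst (subst_var 0 t)) v) v D"
      using eqv_msubst_single[OF v, of "[C]" "up_subst (subst_var 0 t)" TVar]
      by (simp add: eq_refl typing_simps)
    show "eqv [A] (subst 0 t u) (subst 0 t u) C"
      by (rule eq_refl, rule typing_compose[OF u t])
  qed
  finally show ?thesis .
qed

section \<open>Strong semimonads on a cartesian closed category\<close>

definition letmap_ar :: "('o, 'm) sj_model \<Rightarrow> 'o \<Rightarrow> 'o \<Rightarrow> 'm \<Rightarrow> 'm \<Rightarrow> 'm" where
  "letmap_ar M G A u t = cmp M (Dar M u) (cmp M (st M G A) (tup M (idm M G) t))"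

locale strong_semimonad_ccc =
  fixes M :: "('o, 'm) sj_model"
  assumes model: "is_sj_model M"
begin

lemma category: "is_category M" and terminal: "has_terminal M" and products: "has_products M"
  and exponentials: "has_exponentials M" and endofunctor: "is_endofunctor M"
  and strength: "is_strength M" and multiplication: "is_strong_semimonad_mult M"
  using model by (simp_all add: is_sj_model_def)

lemma sdom_scod_ob[simp]: "f \<in> Ar M \<Longrightarrow> sdom M f \<in> Ob M" "f \<in> Ar M \<Longrightarrow> scod M f \<in> Ob M"
  using category by (auto simp: is_category_def)

lemma idm_ar[simp]: "A \<in> Ob M \<Longrightarrow> idm M A \<in> Ar M" "A \<in> Ob M \<Longrightarrow> sdom M (idm M A) = A"
   "A \<in> Ob M \<Longrightarrow> scod M (idm M A) = A"
  using category by (auto simp: is_category_def hom_def)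

lemma cmp_ar[simp]:
  assumes "f \<in> Ar M" "g \<in> Ar M" "sdom M g = scod M f"
  shows "cmp M g f \<in> Ar M" "sdom M (cmp M g f) = sdom M f" "scod M (cmp M g f) = scod M g"
proof -
  have "f \<in> hom M (sdom M f) (scod M f)" "g \<in> hom M (scod M f) (scod M g)"
    using assms by (auto simp: hom_def)
  then have "cmp M g f \<in> hom M (sdom M f) (scod M g)"
    using category unfolding is_category_def by blast
  then show "cmp M g f \<in> Ar M" "sdom M (cmp M g f) = sdom M f" "scod M (cmp M g f) = scod M g"
    by (auto simp: hom_def)
qed

lemma cmp_idm_left[simp]: "f \<in> Ar M \<Longrightarrow> scod M f = B \<Longrightarrow> cmp M (idm M B) f = f"
  and cmp_idm_right[simp]: "f \<in> Ar M \<Longrightarrow> sdom M f = A \<Longrightarrow> cmp M f (idm M A) = f"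
  using category unfolding is_category_def hom_def by blast+

lemma cmp_assoc[simp]:
  assumes "f \<in> Ar M" "g \<in> Ar M" "h \<in> Ar M" "sdom M g = scod M f" "sdom M h = scod M g"
  shows "cmp M (cmp M h g) f = cmp M h (cmp M g f)"
proof -
  have "f \<in> hom M (sdom M f) (scod M f)" "g \<in> hom M (scod M f) (scod M g)"
    "h \<in> hom M (scod M g) (scod M h)" using assms by (auto simp: hom_def)
  then show ?thesis using category unfolding is_category_def by metis
qed

lemma trm_ob[simp]: "trm M \<in> Ob M" using terminal by (simp add: has_terminal_def)

lemma bang_ar[simp]: "A \<in> Ob M \<Longrightarrow> bang M A \<in> Ar M" "A \<in> Ob M \<Longrightarrow> sdom M (bang M A) = A"
  "A \<in> Ob M \<Longrightarrow> scod M (bang M A) = trm M"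
  using terminal by (auto simp: has_terminal_def hom_def)

lemma bang_unique: "f \<in> Ar M \<Longrightarrow> scod M f = trm M \<Longrightarrow> sdom M f = A \<Longrightarrow> f = bang M A"
  using terminal by (auto simp: has_terminal_def hom_def)

lemma prd_ob[simp]: "A \<in> Ob M \<Longrightarrow> B \<in> Ob M \<Longrightarrow> prd M A B \<in> Ob M"
  using products by (simp add: has_products_def)

lemma pi_ar[simp]:
  assumes "A \<in> Ob M" "B \<in> Ob M"
  shows "pi1 M A B \<in> Ar M" "sdom M (pi1 M A B) = prd M A B" "scod M (pi1 M A B) = A"
   "pi2 M A B \<in> Ar M" "sdom M (pi2 M A B) = prd M A B" "scod M (pi2 M A B) = B"
  using products assms by (auto simp: has_products_def hom_def)

lemma tup_ar[simp]:
  assumes "f \<in> Ar M" "g \<in> Ar M" "sdom M f = sdom M g"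
  shows "tup M f g \<in> Ar M" "sdom M (tup M f g) = sdom M f"
      "scod M (tup M f g) = prd M (scod M f) (scod M g)"
proof -
  have "f \<in> hom M (sdom M f) (scod M f)" "g \<in> hom M (sdom M f) (scod M g)"
    using assms by (auto simp: hom_def)
  then have "tup M f g \<in> hom M (sdom M f) (prd M (scod M f) (scod M g))"
    using products assms unfolding has_products_def by simp
  then show "tup M f g \<in> Ar M" "sdom M (tup M f g) = sdom M f"
      "scod M (tup M f g) = prd M (scod M f) (scod M g)"
    by (auto simp: hom_def)
qed

lemma pi_tup[simp]:
  assumes "f \<in> Ar M" "g \<in> Ar M" "sdom M f = sdom M g" "scod M f = A" "scod M g = B"
  shows "cmp M (pi1 M A B) (tup M f g) = f" "cmp M (pi2 M A B) (tup M f g) = g"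
proof -
  have "f \<in> hom M (sdom M f) A" "g \<in> hom M (sdom M f) B" using assms by (auto simp: hom_def)
  then show "cmp M (pi1 M A B) (tup M f g) = f" "cmp M (pi2 M A B) (tup M f g) = g"
    using products assms unfolding has_products_def by auto
qed

lemma tup_eta:
  assumes "h \<in> Ar M" "scod M h = prd M A B" "A \<in> Ob M" "B \<in> Ob M"
  shows "tup M (cmp M (pi1 M A B) h) (cmp M (pi2 M A B) h) = h"
proof -
  have "h \<in> hom M (sdom M h) (prd M A B)" using assms by (auto simp: hom_def)
  then show ?thesis using products assms unfolding has_products_def by metis
qed

lemma pi_tup_cmp[simp]:
  assumes "f \<in> Ar M" "g \<in> Ar M" "sdom M f = sdom M g" "scod M f = A" "scod M g = B"
    "k \<in> Ar M" "scod M k = sdom M f"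
  shows "cmp M (pi1 M A B) (cmp M (tup M f g) k) = cmp M f k"
    "cmp M (pi2 M A B) (cmp M (tup M f g) k) = cmp M g k"
proof -
  have AB: "A \<in> Ob M" "B \<in> Ob M" using assms sdom_scod_ob by blast+
  show "cmp M (pi1 M A B) (cmp M (tup M f g) k) = cmp M f k"
    using assms AB cmp_assoc[of k "tup M f g" "pi1 M A B"] by simp
  show "cmp M (pi2 M A B) (cmp M (tup M f g) k) = cmp M g k"
    using assms AB cmp_assoc[of k "tup M f g" "pi2 M A B"] by simp
qed

lemma tup_cmp:
  assumes "f \<in> Ar M" "g \<in> Ar M" "sdom M f = sdom M g" "k \<in> Ar M" "scod M k = sdom M f"
  shows "cmp M (tup M f g) k = tup M (cmp M f k) (cmp M g k)"
proof -
  let ?A = "scod M f" and ?B = "scod M g"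
  have "tup M (cmp M (pi1 M ?A ?B) (cmp M (tup M f g) k))
      (cmp M (pi2 M ?A ?B) (cmp M (tup M f g) k))
      = cmp M (tup M f g) k"
    by (rule tup_eta) (use assms in auto)
  then show ?thesis using assms by simp
qed

lemma tup_pi_eq_idm[simp]: "A \<in> Ob M \<Longrightarrow> B \<in> Ob M \<Longrightarrow> tup M (pi1 M A B) (pi2 M A B) = idm M (prd M A B)"
  using tup_eta[of "idm M (prd M A B)" A B] by simp

lemma parr_ar[simp]:
  assumes "f \<in> Ar M" "g \<in> Ar M" "sdom M f = A" "sdom M g = B"
  shows "parr M A B f g \<in> Ar M" "sdom M (parr M A B f g) = prd M A B"
    "scod M (parr M A B f g) = prd M (scod M f) (scod M g)"
  using assms by (auto simp: parr_def)

lemma pi_parr: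
  assumes "f \<in> Ar M" "g \<in> Ar M" "sdom M f = A" "sdom M g = B" "scod M f = A'" "scod M g = B'"
  shows "cmp M (pi1 M A' B') (parr M A B f g) = cmp M f (pi1 M A B)"
    "cmp M (pi2 M A' B') (parr M A B f g) = cmp M g (pi2 M A B)"
proof -
  have "A \<in> Ob M" "B \<in> Ob M" using assms sdom_scod_ob by blast+
  then show "cmp M (pi1 M A' B') (parr M A B f g) = cmp M f (pi1 M A B)"
    "cmp M (pi2 M A' B') (parr M A B f g) = cmp M g (pi2 M A B)"
    using assms by (simp_all add: parr_def)
qed

lemma alpha_ar [simp]:
  assumes "X \<in> Ob M" "Y \<in> Ob M" "Z \<in> Ob M"
  shows "alpha M X Y Z \<in> Ar M" "sdom M (alpha M X Y Z) = prd M (prd M X Y) Z"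
    "scod M (alpha M X Y Z) = prd M X (prd M Y Z)"
  using assms by (simp_all add: alpha_def)

declare tup_cmp[simp]

lemma expo_ob[simp]: "X \<in> Ob M \<Longrightarrow> Y \<in> Ob M \<Longrightarrow> expo M X Y \<in> Ob M"
  using exponentials by (simp add: has_exponentials_def)

lemma evl_ar[simp]:
  assumes "X \<in> Ob M" "Y \<in> Ob M"
  shows "evl M X Y \<in> Ar M" "sdom M (evl M X Y) = prd M (expo M X Y) X" "scod M (evl M X Y) = Y"
  using exponentials assms by (auto simp: has_exponentials_def hom_def)

lemma cur_ar[simp]:
  assumes "f \<in> Ar M" "sdom M f = prd M Z X" "Z \<in> Ob M" "X \<in> Ob M"
  shows "cur M Z X f \<in> Ar M" "sdom M (cur M Z X f) = Z" "scod M (cur M Z X f) = expo M X (scod M f)"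
proof -
  have "f \<in> hom M (prd M Z X) (scod M f)" "scod M f \<in> Ob M" using assms by (auto simp: hom_def)
  then have "cur M Z X f \<in> hom M Z (expo M X (scod M f))"
    using exponentials assms unfolding has_exponentials_def by blast
  then show "cur M Z X f \<in> Ar M" "sdom M (cur M Z X f) = Z"
      "scod M (cur M Z X f) = expo M X (scod M f)"
    by (auto simp: hom_def)
qed

lemma evl_cur:
  assumes "f \<in> Ar M" "sdom M f = prd M Z X" "Z \<in> Ob M" "X \<in> Ob M" "scod M f = Y"
  shows "cmp M (evl M X Y) (parr M Z X (cur M Z X f) (idm M X)) = f"
proof -
  have "f \<in> hom M (prd M Z X) Y" "Y \<in> Ob M" using assms by (auto simp: hom_def)
  then show ?thesis using exponentials assms unfolding has_exponentials_def by blast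
qed

lemma cur_unique:
  assumes "h \<in> Ar M" "sdom M h = Z" "scod M h = expo M X Y" "X \<in> Ob M" "Y \<in> Ob M" "Z \<in> Ob M"
    "cmp M (evl M X Y) (parr M Z X h (idm M X)) = f"
  shows "cur M Z X f = h"
proof -
  have "h \<in> hom M Z (expo M X Y)" using assms by (auto simp: hom_def)
  then show ?thesis using exponentials assms unfolding has_exponentials_def by blast
qed

lemma parr_cmp:
  assumes "f \<in> Ar M" "f' \<in> Ar M" "g \<in> Ar M" "g' \<in> Ar M" "sdom M f = A" "sdom M f' = A'"
    "sdom M g = scod M f" "sdom M g' = scod M f'"
  shows "cmp M (parr M (scod M f) (scod M f') g g') (parr M A A' f f')
      = parr M A A' (cmp M g f) (cmp M g' f')"
proof -
  have "A \<in> Ob M" "A' \<in> Ob M" using assms sdom_scod_ob by blast+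
  then show ?thesis using assms by (simp add: parr_def)
qed

lemma cur_nat:
  assumes "f \<in> Ar M" "sdom M f = prd M Z X" "Z \<in> Ob M" "X \<in> Ob M" "r \<in> Ar M" "scod M r = Z"
  shows "cur M (sdom M r) X (cmp M f (parr M (sdom M r) X r (idm M X))) = cmp M (cur M Z X f) r"
proof (rule cur_unique[where Y="scod M f"])
  have W: "sdom M r \<in> Ob M" using assms by simp
  have "cmp M (parr M Z X (cur M Z X f) (idm M X)) (parr M (sdom M r) X r (idm M X))
     = parr M (sdom M r) X (cmp M (cur M Z X f) r) (idm M X)"
    using parr_cmp[of r "idm M X" "cur M Z X f" "idm M X" "sdom M r" X] assms by simp
  then have "cmp M (evl M X (scod M f)) (parr M (sdom M r) X (cmp M (cur M Z X f) r) (idm M X))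
     = cmp M (cmp M (evl M X (scod M f)) (parr M Z X (cur M Z X f) (idm M X)))
         (parr M (sdom M r) X r (idm M X))"
    using assms W by (simp add: parr_def)
  also have "\<dots> = cmp M f (parr M (sdom M r) X r (idm M X))"
    using evl_cur[of f Z X "scod M f"] assms by simp
  finally show "cmp M (evl M X (scod M f)) (parr M (sdom M r) X (cmp M (cur M Z X f) r) (idm M X)) =
    cmp M f (parr M (sdom M r) X r (idm M X))" .
qed (use assms in auto)

lemma Dob_ob[simp]: "A \<in> Ob M \<Longrightarrow> Dob M A \<in> Ob M"
  and Dar_idm[simp]: "A \<in> Ob M \<Longrightarrow> Dar M (idm M A) = idm M (Dob M A)"
  using endofunctor by (auto simp: is_endofunctor_def)

lemma Dar_ar[simp]:
  assumes "f \<in> Ar M"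
  shows "Dar M f \<in> Ar M" "sdom M (Dar M f) = Dob M (sdom M f)" "scod M (Dar M f) = Dob M (scod M f)"
proof -
  have "f \<in> hom M (sdom M f) (scod M f)" using assms by (auto simp: hom_def)
  then have "Dar M f \<in> hom M (Dob M (sdom M f)) (Dob M (scod M f))"
    using endofunctor unfolding is_endofunctor_def by blast
  then show "Dar M f \<in> Ar M" "sdom M (Dar M f) = Dob M (sdom M f)"
      "scod M (Dar M f) = Dob M (scod M f)"
    by (auto simp: hom_def)
qed

lemma Dar_cmp[simp]:
  assumes "f \<in> Ar M" "g \<in> Ar M" "sdom M g = scod M f"
  shows "Dar M (cmp M g f) = cmp M (Dar M g) (Dar M f)"
proof -
  have "f \<in> hom M (sdom M f) (scod M f)" "g \<in> hom M (scod M f) (scod M g)"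
    using assms by (auto simp: hom_def)
  then show ?thesis using endofunctor unfolding is_endofunctor_def by blast
qed

lemma st_ar[simp]:
  assumes "X \<in> Ob M" "Y \<in> Ob M"
  shows "st M X Y \<in> Ar M" "sdom M (st M X Y) = prd M X (Dob M Y)"
      "scod M (st M X Y) = Dob M (prd M X Y)"
  using strength assms by (auto simp: is_strength_def hom_def)

lemma st_nat:
  assumes "f \<in> Ar M" "g \<in> Ar M"
  shows "cmp M (st M (scod M f) (scod M g)) (parr M (sdom M f) (Dob M (sdom M g)) f (Dar M g))
        = cmp M (Dar M (parr M (sdom M f) (sdom M g) f g)) (st M (sdom M f) (sdom M g))"
proof -
  have "f \<in> hom M (sdom M f) (scod M f)" "g \<in> hom M (sdom M g) (scod M g)"
    using assms by (auto simp: hom_def)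
  then show ?thesis using strength unfolding is_strength_def by blast
qed

lemma st_unit: "X \<in> Ob M \<Longrightarrow> cmp M (Dar M (pi2 M (trm M) X)) (st M (trm M) X)
    = pi2 M (trm M) (Dob M X)"
  using strength unfolding is_strength_def by blast

lemma st_assoc: "X \<in> Ob M \<Longrightarrow> Y \<in> Ob M \<Longrightarrow> Z \<in> Ob M \<Longrightarrow>
        cmp M (Dar M (alpha M X Y Z)) (st M (prd M X Y) Z)
        = cmp M (st M X (prd M Y Z))
            (cmp M (parr M X (prd M Y (Dob M Z)) (idm M X) (st M Y Z)) (alpha M X Y (Dob M Z)))"
  using strength unfolding is_strength_def by blast

lemma mu_ar[simp]:
  assumes "X \<in> Ob M"
  shows "mu M X \<in> Ar M" "sdom M (mu M X) = Dob M (Dob M X)" "scod M (mu M X) = Dob M X"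
  using multiplication assms by (auto simp: is_strong_semimonad_mult_def hom_def)

lemma mu_nat: "f \<in> Ar M \<Longrightarrow> cmp M (mu M (scod M f)) (Dar M (Dar M f))
    = cmp M (Dar M f) (mu M (sdom M f))"
  using multiplication unfolding is_strong_semimonad_mult_def hom_def by blast

lemma mu_assoc: "X \<in> Ob M \<Longrightarrow> cmp M (mu M X) (mu M (Dob M X)) = cmp M (mu M X) (Dar M (mu M X))"
  using multiplication unfolding is_strong_semimonad_mult_def by blast

lemma mu_st: "X \<in> Ob M \<Longrightarrow> Y \<in> Ob M \<Longrightarrow>
        cmp M (mu M (prd M X Y)) (cmp M (Dar M (st M X Y)) (st M X (Dob M Y)))
        = cmp M (st M X Y) (parr M X (Dob M (Dob M Y)) (idm M X) (mu M Y))"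
  using multiplication unfolding is_strong_semimonad_mult_def by blast

lemma cmp_reassoc:
  assumes "cmp M a b = c" "a \<in> Ar M" "b \<in> Ar M" "w \<in> Ar M"
    "sdom M a = scod M b" "sdom M b = scod M w"
  shows "cmp M a (cmp M b w) = cmp M c w"
  using assms cmp_assoc[of w b a] by simp

lemma letmap_ar_ar [simp]:
  assumes "G \<in> Ob M" "A \<in> Ob M" "t \<in> Ar M" "sdom M t = G" "scod M t = Dob M A"
    "u \<in> Ar M" "sdom M u = prd M G A"
  shows "letmap_ar M G A u t \<in> Ar M" "sdom M (letmap_ar M G A u t) = G"
    "scod M (letmap_ar M G A u t) = Dob M (scod M u)"
  using assms by (simp_all add: letmap_ar_def)

lemma Dar_cmp_letmap_ar:
  assumes "G \<in> Ob M" "A \<in> Ob M" "t \<in> Ar M" "sdom M t = G" "scod M t = Dob M A"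
    "u \<in> Ar M" "sdom M u = prd M G A" "f \<in> Ar M" "sdom M f = scod M u"
  shows "cmp M (Dar M f) (letmap_ar M G A u t) = letmap_ar M G A (cmp M f u) t"
  using assms by (simp add: letmap_ar_def)

lemma letmap_ar_pi2:
  assumes G: "G \<in> Ob M" and A: "A \<in> Ob M" and t: "t \<in> Ar M" "sdom M t = G" "scod M t = Dob M A"
  shows "letmap_ar M G A (pi2 M G A) t = t"
proof -
  let ?p = "parr M G A (bang M G) (idm M A)"
  have "cmp M (Dar M (pi2 M G A)) (st M G A)
      = cmp M (Dar M (cmp M (pi2 M (trm M) A) ?p)) (st M G A)"
    using pi_parr(2)[of "bang M G" "idm M A" G A "trm M" A] G A by simp
  also have "\<dots> = cmp M (Dar M (pi2 M (trm M) A))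
      (cmp M (st M (trm M) A) (parr M G (Dob M A) (bang M G) (idm M (Dob M A))))"
    using st_nat[of "bang M G" "idm M A"] G A by simp
  also have "\<dots> = cmp M (pi2 M (trm M) (Dob M A)) (parr M G (Dob M A) (bang M G) (idm M (Dob M A)))"
    by (rule cmp_reassoc[OF st_unit[OF A]]) (use G A in \<open>simp_all add: parr_def\<close>)
  also have "\<dots> = pi2 M G (Dob M A)"
    using pi_parr(2)[of "bang M G" "idm M (Dob M A)" G "Dob M A" "trm M" "Dob M A"] G A by simp
  finally have "cmp M (Dar M (pi2 M G A)) (st M G A) = pi2 M G (Dob M A)" .
  then show ?thesis
    unfolding letmap_ar_def using cmp_reassoc G A t by simp
qed

lemma letmap_ar_nat:
  assumes r: "r \<in> Ar M" "sdom M r = X" "scod M r = Y" and A: "A \<in> Ob M"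
    and t: "t \<in> Ar M" "sdom M t = Y" "scod M t = Dob M A"
    and u: "u \<in> Ar M" "sdom M u = prd M Y A"
  shows "letmap_ar M X A (cmp M u (tup M (cmp M r (pi1 M X A)) (pi2 M X A))) (cmp M t r)
     = cmp M (letmap_ar M Y A u t) r"
proof -
  have X: "X \<in> Ob M" "Y \<in> Ob M" using r sdom_scod_ob by blast+
  let ?p = "tup M (cmp M r (pi1 M X A)) (pi2 M X A)"
  have "cmp M (Dar M ?p) (st M X A)
      = cmp M (st M Y A) (tup M (cmp M r (pi1 M X (Dob M A))) (pi2 M X (Dob M A)))"
    using st_nat[of r "idm M A"] r A X by (simp add: parr_def)
  then have "cmp M (Dar M ?p) (cmp M (st M X A) (tup M (idm M X) (cmp M t r)))
      = cmp M (cmp M (st M Y A) (tup M (cmp M r (pi1 M X (Dob M A))) (pi2 M X (Dob M A))))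
          (tup M (idm M X) (cmp M t r))"
    by (rule cmp_reassoc) (use r A X t in simp_all)
  then show ?thesis using r A X t u by (simp add: letmap_ar_def)
qed

text \<open>The associativity law of the strength, applied along the diagonal \<open>G \<rightarrow> G \<times> G\<close>,
  collapses the nested strengths.\<close>

lemma st_tup_st:
  assumes G: "G \<in> Ob M" and A: "A \<in> Ob M" and t: "t \<in> Ar M" "sdom M t = G" "scod M t = Dob M A"
  shows "cmp M (st M G (prd M G A)) (tup M (idm M G) (cmp M (st M G A) (tup M (idm M G) t)))
       = letmap_ar M G A (tup M (pi1 M G A) (idm M (prd M G A))) t"
proof -
  define s where "s = cmp M (st M G A) (tup M (idm M G) t)"
  have s: "s \<in> Ar M" "sdom M s = G"
      "scod M s = Dob M (prd M G A)" using G A t by (simp_all add: s_def)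
  define w where "w = tup M (tup M (idm M G) (idm M G)) t"
  have w: "w \<in> Ar M" "sdom M w = G" "scod M w = prd M (prd M G G) (Dob M A)"
    using G A t by (simp_all add: w_def)
  define d where "d = parr M G A (tup M (idm M G) (idm M G)) (idm M A)"
  have d: "d \<in> Ar M" "sdom M d = prd M G A" "scod M d = prd M (prd M G G) A"
    using G A by (simp_all add: d_def)
  have "cmp M (cmp M (parr M G (prd M G (Dob M A)) (idm M G) (st M G A)) (alpha M G G (Dob M A))) w
      = tup M (idm M G) s"
    using G A t by (simp add: w_def s_def alpha_def parr_def)
  then have "cmp M (st M G (prd M G A)) (tup M (idm M G) s)
      = cmp M (cmp M (Dar M (alpha M G G A)) (st M (prd M G G) A)) w"
    using st_assoc[OF G G A] G A w by (simp add: alpha_def parr_def)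
  also have "\<dots> = cmp M (Dar M (alpha M G G A)) (cmp M (st M (prd M G G) A) w)"
    using G A w by (simp add: alpha_def)
  also have "cmp M (st M (prd M G G) A) w
      = cmp M (cmp M (st M (prd M G G) A)
          (parr M G (Dob M A) (tup M (idm M G) (idm M G)) (idm M (Dob M A))))
          (tup M (idm M G) t)"
    using G A t by (simp add: w_def parr_def)
  also have "\<dots> = cmp M (Dar M d) s"
    using st_nat[of "tup M (idm M G) (idm M G)" "idm M A"] G A t by (simp add: s_def d_def parr_def)
  also have "cmp M (Dar M (alpha M G G A)) (cmp M (Dar M d) s)
      = cmp M (Dar M (cmp M (alpha M G G A) d)) s"
    using G A d s by simp
  also have "cmp M (alpha M G G A) d = tup M (pi1 M G A) (idm M (prd M G A))"
    using G A by (simp add: alpha_def d_def parr_def)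
  finally show ?thesis by (simp add: letmap_ar_def s_def)
qed

lemma st_tup_letmap_ar:
  assumes G: "G \<in> Ob M" and A: "A \<in> Ob M"
    and t: "t \<in> Ar M" "sdom M t = G" "scod M t = Dob M A"
    and g: "g \<in> Ar M" "sdom M g = prd M G A" "scod M g = B"
  shows "cmp M (st M G B) (tup M (idm M G) (letmap_ar M G A g t))
      = letmap_ar M G A (tup M (pi1 M G A) g) t"
proof -
  define s where "s = cmp M (st M G A) (tup M (idm M G) t)"
  have s: "s \<in> Ar M" "sdom M s = G"
      "scod M s = Dob M (prd M G A)" using G A t by (simp_all add: s_def)
  let ?p = "parr M G (prd M G A) (idm M G) g"
  have B: "B \<in> Ob M" using g sdom_scod_ob by blast
  have "cmp M (st M G B) (tup M (idm M G) (letmap_ar M G A g t))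
      = cmp M (cmp M (st M G B) (parr M G (Dob M (prd M G A)) (idm M G) (Dar M g)))
          (tup M (idm M G) s)"
    using G A B g s by (simp add: letmap_ar_def s_def parr_def)
  also have "\<dots> = cmp M (Dar M ?p) (cmp M (st M G (prd M G A)) (tup M (idm M G) s))"
    using st_nat[of "idm M G" g] G A B g s by (simp add: parr_def)
  also have "\<dots> = cmp M (Dar M ?p) (letmap_ar M G A (tup M (pi1 M G A) (idm M (prd M G A))) t)"
    using st_tup_st[OF G A t] by (simp add: s_def)
  also have "\<dots> = letmap_ar M G A (tup M (pi1 M G A) g) t"
    using G A g t by (simp add: Dar_cmp_letmap_ar parr_def)
  finally show ?thesis .
qed

lemma letmap_ar_letmap_ar:
  assumes G: "G \<in> Ob M" and A: "A \<in> Ob M"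
    and t: "t \<in> Ar M" "sdom M t = G" "scod M t = Dob M A"
    and u: "u \<in> Ar M" "sdom M u = prd M G A" "scod M u = B"
    and u': "u' \<in> Ar M" "sdom M u' = prd M G B"
  shows "letmap_ar M G B u' (letmap_ar M G A u t)
      = letmap_ar M G A (cmp M u' (tup M (pi1 M G A) u)) t"
proof -
  have "letmap_ar M G B u' (letmap_ar M G A u t)
      = cmp M (Dar M u') (cmp M (st M G B) (tup M (idm M G) (letmap_ar M G A u t)))"
    by (simp add: letmap_ar_def)
  also have "\<dots> = cmp M (Dar M u') (letmap_ar M G A (tup M (pi1 M G A) u) t)"
    using st_tup_letmap_ar[OF G A t u] by simp
  finally show ?thesis using G A t u u' by (simp add: Dar_cmp_letmap_ar)
qed

lemma st_pi1_tup:
  assumes G: "G \<in> Ob M" and A: "A \<in> Ob M" and B: "B \<in> Ob M"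
    and u: "u \<in> Ar M" "sdom M u = prd M G A" "scod M u = Dob M B"
  shows "cmp M (st M G B) (tup M (pi1 M G A) u)
     = letmap_ar M (prd M G A) B (parr M (prd M G A) B (pi1 M G A) (idm M B)) u"
proof -
  have "cmp M (st M G B) (parr M (prd M G A) (Dob M B) (pi1 M G A) (Dar M (idm M B)))
     = cmp M (Dar M (parr M (prd M G A) B (pi1 M G A) (idm M B))) (st M (prd M G A) B)"
    using st_nat[of "pi1 M G A" "idm M B"] G A B by simp
  then have "cmp M (st M G B) (cmp M (parr M (prd M G A) (Dob M B) (pi1 M G A) (Dar M (idm M B)))
        (tup M (idm M (prd M G A)) u))
      = cmp M (cmp M (Dar M (parr M (prd M G A) B (pi1 M G A) (idm M B))) (st M (prd M G A) B))
        (tup M (idm M (prd M G A)) u)"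
    by (rule cmp_reassoc) (use G A B u in \<open>simp_all add: parr_def\<close>)
  then show ?thesis using G A B u by (simp add: letmap_ar_def parr_def)
qed

lemma st_tup_let:
  assumes G: "G \<in> Ob M" and A: "A \<in> Ob M" and B: "B \<in> Ob M"
    and t: "t \<in> Ar M" "sdom M t = G" "scod M t = Dob M A"
    and u: "u \<in> Ar M" "sdom M u = prd M G A" "scod M u = Dob M B"
  shows "cmp M (st M G B) (tup M (idm M G) (cmp M (mu M B) (letmap_ar M G A u t)))
       = cmp M (mu M (prd M G B)) (letmap_ar M G A (cmp M (st M G B) (tup M (pi1 M G A) u)) t)"
proof -
  define k where "k = letmap_ar M G A u t"
  have k: "k \<in> Ar M" "sdom M k = G"
      "scod M k = Dob M (Dob M B)" using G A t u by (simp_all add: k_def)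
  let ?p = "parr M G (Dob M (Dob M B)) (idm M G) (mu M B)"
  have "cmp M (st M G B) (tup M (idm M G) (cmp M (mu M B) k))
      = cmp M (st M G B) (cmp M ?p (tup M (idm M G) k))"
    using G B k by (simp add: parr_def)
  also have "\<dots> = cmp M (cmp M (st M G B) ?p) (tup M (idm M G) k)"
    by (rule cmp_assoc[symmetric]) (use G B k in \<open>simp_all add: parr_def\<close>)
  also have "\<dots> = cmp M (mu M (prd M G B))
      (cmp M (Dar M (st M G B)) (cmp M (st M G (Dob M B)) (tup M (idm M G) k)))"
    unfolding mu_st[OF G B, symmetric] using G B k by simp
  also have "\<dots> = cmp M (mu M (prd M G B))
      (cmp M (Dar M (st M G B)) (letmap_ar M G A (tup M (pi1 M G A) u) t))"
    using st_tup_letmap_ar[OF G A t u] by (simp add: k_def)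
  finally show ?thesis using G A B t u by (simp add: Dar_cmp_letmap_ar k_def)
qed

lemma letmap_ar_let:
  assumes G: "G \<in> Ob M" and A: "A \<in> Ob M" and B: "B \<in> Ob M"
    and t: "t \<in> Ar M" "sdom M t = G" "scod M t = Dob M A"
    and u: "u \<in> Ar M" "sdom M u = prd M G A" "scod M u = Dob M B"
    and u': "u' \<in> Ar M" "sdom M u' = prd M G B" "scod M u' = C"
  shows "letmap_ar M G B u' (cmp M (mu M B) (letmap_ar M G A u t))
    = cmp M (mu M C) (letmap_ar M G A
        (letmap_ar M (prd M G A) B (cmp M u' (parr M (prd M G A) B (pi1 M G A) (idm M B))) u) t)"
proof -
  define X where "X = cmp M (st M G B) (tup M (pi1 M G A) u)"
  have X: "X \<in> Ar M" "sdom M X = prd M G A" "scod M X = Dob M (prd M G B)"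
    using G A B u by (simp_all add: X_def)
  have C: "C \<in> Ob M" using u' sdom_scod_ob by blast
  have "letmap_ar M G B u' (cmp M (mu M B) (letmap_ar M G A u t))
      = cmp M (Dar M u') (cmp M (mu M (prd M G B)) (letmap_ar M G A X t))"
    using st_tup_let[OF G A B t u] by (simp add: letmap_ar_def X_def)
  also have "\<dots> = cmp M (cmp M (mu M C) (Dar M (Dar M u'))) (letmap_ar M G A X t)"
    by (rule cmp_reassoc) (use mu_nat[of u'] G A B C X t u' in simp_all)
  also have "\<dots> = cmp M (mu M C) (letmap_ar M G A (cmp M (Dar M u') X) t)"
    using G A B C X t u' by (simp add: Dar_cmp_letmap_ar)
  finally show ?thesis
    using st_pi1_tup[OF G A B u] G A B u u' by (simp add: X_def Dar_cmp_letmap_ar parr_def)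
qed

lemma let_let:
  assumes G: "G \<in> Ob M" and A: "A \<in> Ob M" and B: "B \<in> Ob M" and C: "C \<in> Ob M"
    and t: "t \<in> Ar M" "sdom M t = G" "scod M t = Dob M A"
    and u: "u \<in> Ar M" "sdom M u = prd M G A" "scod M u = Dob M B"
    and u': "u' \<in> Ar M" "sdom M u' = prd M G B" "scod M u' = Dob M C"
  shows "cmp M (mu M C) (letmap_ar M G B u' (cmp M (mu M B) (letmap_ar M G A u t)))
    = cmp M (mu M C) (letmap_ar M G A
        (cmp M (mu M C) (letmap_ar M (prd M G A) B
            (cmp M u' (parr M (prd M G A) B (pi1 M G A) (idm M B))) u)) t)"
proof -
  define Y where "Y = letmap_ar M (prd M G A) B
      (cmp M u' (parr M (prd M G A) B (pi1 M G A) (idm M B))) u"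
  have Y: "Y \<in> Ar M" "sdom M Y = prd M G A" "scod M Y = Dob M (Dob M C)"
    using G A B u u' by (simp_all add: Y_def parr_def)
  have "cmp M (mu M C) (letmap_ar M G B u' (cmp M (mu M B) (letmap_ar M G A u t)))
      = cmp M (mu M C) (cmp M (mu M (Dob M C)) (letmap_ar M G A Y t))"
    using letmap_ar_let[OF G A B t u u'] by (simp add: Y_def)
  also have "\<dots> = cmp M (cmp M (mu M C) (Dar M (mu M C))) (letmap_ar M G A Y t)"
    by (rule cmp_reassoc) (use mu_assoc C G A Y t in simp_all)
  also have "\<dots> = cmp M (mu M C) (letmap_ar M G A (cmp M (mu M C) Y) t)"
    using G A C Y t by (simp add: Dar_cmp_letmap_ar)
  finally show ?thesis by (simp add: Y_def)
qed

end

section \<open>Soundness\<close>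

locale sj_interpretation = strong_semimonad_ccc M for M :: "('o, 'm) sj_model" +
  fixes \<iota> :: 'o
  assumes base_ob: "\<iota> \<in> Ob M"
begin

abbreviation "cobj \<equiv> ctx_obj M \<iota>"
abbreviation "tobj \<equiv> ty_obj M \<iota>"
abbreviation "Sem \<equiv> sem M \<iota>"

lemma ty_obj_ob [simp]: "tobj A \<in> Ob M"
  by (induction A) (simp_all add: base_ob)

lemma ctx_obj_ob [simp]: "cobj G \<in> Ob M"
  by (induction G) simp_all

lemma var_sem_ar [simp]:
  assumes "i < length G"
  shows "var_sem M \<iota> G i \<in> Ar M" "sdom M (var_sem M \<iota> G i) = cobj G"
    "scod M (var_sem M \<iota> G i) = tobj (G ! i)"
proof -
  from assms have "var_sem M \<iota> G i \<in> Ar M \<and> sdom M (var_sem M \<iota> G i) = cobj G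
      \<and> scod M (var_sem M \<iota> G i) = tobj (G ! i)"
  proof (induction G arbitrary: i)
    case (Cons A G)
    then show ?case by (cases i) auto
  qed simp
  then show "var_sem M \<iota> G i \<in> Ar M" "sdom M (var_sem M \<iota> G i) = cobj G"
    "scod M (var_sem M \<iota> G i) = tobj (G ! i)" by simp_all
qed

lemma sem_ar [simp]:
  assumes "typing G t A"
  shows "Sem G t \<in> Ar M" "sdom M (Sem G t) = cobj G" "scod M (Sem G t) = tobj A"
proof -
  from assms have "Sem G t \<in> Ar M \<and> sdom M (Sem G t) = cobj G \<and> scod M (Sem G t) = tobj A"
    by (induction rule: typing.induct) (simp_all add: tyof_eq Let_def letmap_ar_def[symmetric])
  then show "Sem G t \<in> Ar M" "sdom M (Sem G t) = cobj G" "scod M (Sem G t) = tobj A" by simp_all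
qed

lemma sem_TLetmap:
  "typing G t (TyDia A) \<Longrightarrow> Sem G (TLetmap t u)
      = letmap_ar M (cobj G) (tobj A) (Sem (A # G) u) (Sem G t)"
  by (simp add: tyof_eq letmap_ar_def)

lemma sem_TLet:
  "typing G t (TyDia A) \<Longrightarrow> typing (A # G) u (TyDia B) \<Longrightarrow>
   Sem G (TLet t u) = cmp M (mu M (tobj B))
       (letmap_ar M (cobj G) (tobj A) (Sem (A # G) u) (Sem G t))"
  by (simp add: tyof_eq letmap_ar_def)

definition ctx_up :: "'m \<Rightarrow> ty list \<Rightarrow> ty \<Rightarrow> 'm" where
  "ctx_up r G A = tup M (cmp M r (pi1 M (cobj G) (tobj A))) (pi2 M (cobj G) (tobj A))"

lemma ctx_up_ar [simp]:
  assumes "r \<in> Ar M" "sdom M r = cobj G"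
  shows "ctx_up r G A \<in> Ar M" "sdom M (ctx_up r G A) = cobj (A # G)"
    "scod M (ctx_up r G A) = prd M (scod M r) (tobj A)"
  using assms by (simp_all add: ctx_up_def)

lemma letmap_ar_ctx_up:
  assumes r: "r \<in> Ar M" "sdom M r = cobj G" "scod M r = cobj D"
    and t: "typing D t (TyDia A)" and u: "typing (A # D) u B"
  shows "letmap_ar M (cobj G) (tobj A) (cmp M (Sem (A # D) u) (ctx_up r G A)) (cmp M (Sem D t) r)
    = cmp M (letmap_ar M (cobj D) (tobj A) (Sem (A # D) u) (Sem D t)) r"
  unfolding ctx_up_def by (rule letmap_ar_nat) (use r t u in simp_all)

definition interprets_subst :: "ty list \<Rightarrow> ty list \<Rightarrow> (nat \<Rightarrow> tm) \<Rightarrow> 'm \<Rightarrow> bool" where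
  "interprets_subst G D s r \<longleftrightarrow> r \<in> Ar M \<and> sdom M r = cobj G \<and> scod M r = cobj D \<and>
     (\<forall>i<length D. typing G (s i) (D ! i) \<and> cmp M (var_sem M \<iota> D i) r = Sem G (s i))"

lemma interprets_subst_up:
  assumes s: "interprets_subst G D s r"
    and weaken: "\<forall>i<length D. Sem (A # G) (ren Suc (s i))
        = cmp M (Sem G (s i)) (pi1 M (cobj G) (tobj A))"
  shows "interprets_subst (A # G) (A # D) (up_subst s) (ctx_up r G A)"
  unfolding interprets_subst_def
proof (intro conjI allI impI)
  show "ctx_up r G A \<in> Ar M" "sdom M (ctx_up r G A) = cobj (A # G)"
      "scod M (ctx_up r G A) = cobj (A # D)"
    using s by (simp_all add: interprets_subst_def)
  fix i assume i: "i < length (A # D)"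
  show "typing (A # G) (up_subst s i) ((A # D) ! i)"
    using typing_up_subst s i by (simp add: interprets_subst_def)
  show "cmp M (var_sem M \<iota> (A # D) i) (ctx_up r G A) = Sem (A # G) (up_subst s i)"
  proof (cases i)
    case 0
    then show ?thesis using s by (simp add: interprets_subst_def ctx_up_def)
  next
    case (Suc j)
    with i have j: "j < length D" by simp
    with s have r: "cmp M (var_sem M \<iota> D j) r = Sem G (s j)" "r \<in> Ar M" "sdom M r = cobj G"
      "scod M r = cobj D"
      by (simp_all add: interprets_subst_def)
    then have "cmp M (var_sem M \<iota> D j) (cmp M r (pi1 M (cobj G) (tobj A)))
        = cmp M (Sem G (s j)) (pi1 M (cobj G) (tobj A))"
      by (intro cmp_reassoc) (simp_all add: j)
    with Suc j r weaken show ?thesis by (simp add: ctx_up_def)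
  qed
qed

text \<open>Stated for any class of substitutions closed under going below a binder, so that it can be
  applied first to renamings, which yields weakening, and then to arbitrary substitutions.\<close>

lemma sem_msubst_closed:
  assumes P_subst: "\<And>G D s r. P G D s r \<Longrightarrow> interprets_subst G D s r"
    and P_up: "\<And>G D s r A. P G D s r \<Longrightarrow> P (A # G) (A # D) (up_subst s) (ctx_up r G A)"
  shows "typing D t B \<Longrightarrow> P G D s r \<Longrightarrow> Sem G (msubst s t) = cmp M (Sem D t) r"
proof (induction arbitrary: G s r rule: typing.induct)
  case (ty_var i \<Gamma>)
  then show ?case using P_subst by (simp add: interprets_subst_def)
next
  case (ty_unit \<Gamma>)
  have "cmp M (bang M (cobj \<Gamma>)) r = bang M (cobj G)"
    by (rule bang_unique) (use P_subst[OF ty_unit] in \<open>simp_all add: interprets_subst_def\<close>)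
  then show ?case by simp
next
  case (ty_pair \<Gamma> t A u B)
  then show ?case using P_subst[OF ty_pair.prems] by (simp add: interprets_subst_def)
next
  case (ty_fst \<Gamma> t A B)
  have "typing G (msubst s t) (TyProd A B)"
    using typing_msubst ty_fst P_subst by (auto simp: interprets_subst_def)
  then show ?case using ty_fst P_subst[OF ty_fst.prems] by (simp add: tyof_eq interprets_subst_def)
next
  case (ty_snd \<Gamma> t A B)
  have "typing G (msubst s t) (TyProd A B)"
    using typing_msubst ty_snd P_subst by (auto simp: interprets_subst_def)
  then show ?case using ty_snd P_subst[OF ty_snd.prems] by (simp add: tyof_eq interprets_subst_def)
next
  case (ty_app \<Gamma> t A B u)
  have "typing G (msubst s t) (TyArr A B)"
    using typing_msubst ty_app P_subst by (auto simp: interprets_subst_def)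
  then show ?case using ty_app P_subst[OF ty_app.prems] by (simp add: tyof_eq interprets_subst_def)
next
  case (ty_lam A \<Gamma> t B)
  have r: "r \<in> Ar M" "sdom M r = cobj G" "scod M r = cobj \<Gamma>"
    using P_subst[OF ty_lam.prems] by (simp_all add: interprets_subst_def)
  have "Sem (A # G) (msubst (up_subst s) t) = cmp M (Sem (A # \<Gamma>) t) (ctx_up r G A)"
    using ty_lam.IH P_up[OF ty_lam.prems] by blast
  then show ?case
    using cur_nat[of "Sem (A # \<Gamma>) t" "cobj \<Gamma>" "tobj A" r] ty_lam r
    by (simp add: ctx_up_def parr_def)
next
  case (ty_letmap \<Gamma> t A u B)
  have r: "r \<in> Ar M" "sdom M r = cobj G" "scod M r = cobj \<Gamma>"
    using P_subst[OF ty_letmap.prems] by (simp_all add: interprets_subst_def)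
  have t: "typing G (msubst s t) (TyDia A)"
    using typing_msubst[OF ty_letmap(1)] P_subst[OF ty_letmap.prems]
    by (simp add: interprets_subst_def)
  have "Sem G (msubst s (TLetmap t u))
      = letmap_ar M (cobj G) (tobj A) (Sem (A # G) (msubst (up_subst s) u)) (Sem G (msubst s t))"
    by (simp only: msubst.simps sem_TLetmap[OF t])
  then show ?case
    unfolding sem_TLetmap[OF ty_letmap(1)]
    using ty_letmap.IH(1)[OF ty_letmap.prems] ty_letmap.IH(2)[OF P_up[OF ty_letmap.prems]]
      letmap_ar_ctx_up[OF r ty_letmap(1,2)] by simp
next
  case (ty_let \<Gamma> t A u B)
  have r: "r \<in> Ar M" "sdom M r = cobj G" "scod M r = cobj \<Gamma>"
    using P_subst[OF ty_let.prems] by (simp_all add: interprets_subst_def)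
  have t: "typing G (msubst s t) (TyDia A)"
    using typing_msubst[OF ty_let(1)] P_subst[OF ty_let.prems] by (simp add: interprets_subst_def)
  have u: "typing (A # G) (msubst (up_subst s) u) (TyDia B)"
    using typing_msubst[OF ty_let(2)] P_subst[OF P_up[OF ty_let.prems]]
    by (simp add: interprets_subst_def)
  have "Sem G (msubst s (TLet t u)) = cmp M (mu M (tobj B))
      (letmap_ar M (cobj G) (tobj A) (Sem (A # G) (msubst (up_subst s) u)) (Sem G (msubst s t)))"
    by (simp only: msubst.simps sem_TLet[OF t u])
  then show ?case
    unfolding sem_TLet[OF ty_let(1,2)]
    using ty_let.IH(1)[OF ty_let.prems] ty_let.IH(2)[OF P_up[OF ty_let.prems]]
      letmap_ar_ctx_up[OF r ty_let(1,2)] r ty_let by simp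
qed

lemma sem_ren:
  assumes t: "typing D t B" and f: "interprets_subst G D (TVar \<circ> f) r"
  shows "Sem G (ren f t) = cmp M (Sem D t) r"
proof -
  let ?P = "\<lambda>G D s r. interprets_subst G D s r \<and> (\<exists>f. s = TVar \<circ> f)"
  have up: "?P (A # G) (A # D) (up_subst s) (ctx_up r G A)" if "?P G D s r" for G D s r A
  proof -
    from that obtain f where s: "interprets_subst G D s r" "s = TVar \<circ> f" by blast
    have "up_subst s = TVar \<circ> up_ren f"
      using s(2) by (auto simp: fun_eq_iff up_subst_def split: nat.split)
    moreover have "interprets_subst (A # G) (A # D) (up_subst s) (ctx_up r G A)"
      by (rule interprets_subst_up[OF s(1)])
          (use s in \<open>auto simp: interprets_subst_def typing_simps\<close>)
    ultimately show ?thesis by blast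
  qed
  have "Sem G (msubst (TVar \<circ> f) t) = cmp M (Sem D t) r"
    by (rule sem_msubst_closed[of ?P]) (use up t f in blast)+
  then show ?thesis by (simp add: ren_eq_msubst)
qed

lemma sem_weaken: "typing G t A \<Longrightarrow> Sem (B # G) (ren Suc t)
    = cmp M (Sem G t) (pi1 M (cobj G) (tobj B))"
  by (erule sem_ren) (auto simp: interprets_subst_def typing_simps)

lemma sem_msubst:
  assumes "typing D t B" and "interprets_subst G D s r"
  shows "Sem G (msubst s t) = cmp M (Sem D t) r"
proof (rule sem_msubst_closed[of interprets_subst])
  show "interprets_subst (A # G) (A # D) (up_subst s) (ctx_up r G A)" if
      "interprets_subst G D s r" for G D s r A
    by (rule interprets_subst_up[OF that])
        (use that in \<open>auto simp: interprets_subst_def sem_weaken\<close>)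
qed (use assms in auto)

lemma sem_subst0:
  assumes t: "typing (A # G) t B" and u: "typing G u A"
  shows "Sem G (subst 0 u t) = cmp M (Sem (A # G) t) (tup M (idm M (cobj G)) (Sem G u))"
  unfolding subst_eq_msubst
  by (rule sem_msubst[OF t])
     (use u in \<open>auto simp: interprets_subst_def subst_var_def nth_Cons typing_simps split:
         nat.split\<close>)

lemma sem_lift0: "typing G t A \<Longrightarrow> Sem (B # G) (lift 0 t) = cmp M (Sem G t) (pi1 M (cobj G) (tobj B))"
  by (simp add: lift0_eq_ren sem_weaken)

lemma sem_lift1:
  assumes "typing (B # G) t A"
  shows "Sem (B # C # G) (lift 1 t)
    = cmp M (Sem (B # G) t) (parr M (cobj (C # G)) (tobj B) (pi1 M (cobj G) (tobj C))
        (idm M (tobj B)))"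
  unfolding lift_eq_ren
  by (rule sem_ren[OF assms])
     (auto simp: interprets_subst_def lift_var_def parr_def nth_Cons typing_simps split: nat.split)

lemma sem_subst0_lift1:
  assumes u: "typing (A # G) u B" and u': "typing (B # G) u' C"
  shows "Sem (A # G) (subst 0 u (lift 1 u'))
      = cmp M (Sem (B # G) u') (tup M (pi1 M (cobj G) (tobj A)) (Sem (A # G) u))"
  using sem_subst0[OF typing_lift1[OF u'] u] sem_lift1[OF u', of A] u u' by (simp add: parr_def)


lemma sem_fun_eta:
  assumes t: "typing G t (TyArr A B)"
  shows "Sem G (TLam A (TApp (lift 0 t) (TVar 0))) = Sem G t"
proof -
  have "cur M (cobj G) (tobj A)
      (cmp M (evl M (tobj A) (tobj B)) (parr M (cobj G) (tobj A) (Sem G t) (idm M (tobj A))))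
      = Sem G t"
    by (rule cur_unique) (use t in simp_all)
  then show ?thesis using t typing_lift0[OF t, of A] by (simp add: tyof_eq sem_lift0 parr_def)
qed

lemma sem_fun_beta:
  assumes t: "typing (A # G) t B" and u: "typing G u A"
  shows "Sem G (TApp (TLam A t) u) = Sem G (subst 0 u t)"
proof -
  let ?f = "parr M (cobj G) (tobj A) (cur M (cobj G) (tobj A) (Sem (A # G) t)) (idm M (tobj A))"
  have "cmp M (evl M (tobj A) (tobj B)) ?f = Sem (A # G) t"
    by (rule evl_cur) (use t in simp_all)
  then have "cmp M (evl M (tobj A) (tobj B)) (cmp M ?f (tup M (idm M (cobj G)) (Sem G u)))
      = cmp M (Sem (A # G) t) (tup M (idm M (cobj G)) (Sem G u))"
    by (rule cmp_reassoc) (use t u in \<open>simp_all add: parr_def\<close>)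
  then show ?thesis using t u typing.ty_lam[OF t] by (simp add: tyof_eq sem_subst0 parr_def)
qed

lemma sem_letmap_letmap:
  assumes t: "typing G t (TyDia A)" and u: "typing (A # G) u B" and u': "typing (B # G) u' C"
  shows "Sem G (TLetmap (TLetmap t u) u') = Sem G (TLetmap t (subst 0 u (lift 1 u')))"
proof -
  have tu: "typing G (TLetmap t u) (TyDia B)" using t u by (rule ty_letmap)
  show ?thesis
    unfolding sem_TLetmap[OF tu] sem_TLetmap[OF t] sem_subst0_lift1[OF u u']
    using t u u' by (simp add: letmap_ar_letmap_ar)
qed

lemma sem_let_letmap:
  assumes t: "typing G t (TyDia A)" and u: "typing (A # G) u B"
    and u': "typing (B # G) u' (TyDia C)"
  shows "Sem G (TLet (TLetmap t u) u') = Sem G (TLet t (subst 0 u (lift 1 u')))"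
proof -
  have tu: "typing G (TLetmap t u) (TyDia B)" using t u by (rule ty_letmap)
  have body: "typing (A # G) (subst 0 u (lift 1 u')) (TyDia C)"
    using u u' by (blast intro: typing_subst0 typing_lift1)
  show ?thesis
    unfolding sem_TLet[OF tu u'] sem_TLet[OF t body] sem_TLetmap[OF t] sem_subst0_lift1[OF u u']
    using t u u' by (simp add: letmap_ar_letmap_ar)
qed

lemma sem_letmap_let:
  assumes t: "typing G t (TyDia A)" and u: "typing (A # G) u (TyDia B)"
    and u': "typing (B # G) u' C"
  shows "Sem G (TLetmap (TLet t u) u') = Sem G (TLet t (TLetmap u (lift 1 u')))"
proof -
  have tu: "typing G (TLet t u) (TyDia B)" using t u by (rule ty_let)
  have body: "typing (A # G) (TLetmap u (lift 1 u')) (TyDia C)"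
    using u u' by (blast intro: ty_letmap typing_lift1)
  show ?thesis
    unfolding sem_TLetmap[OF tu] sem_TLet[OF t u] sem_TLet[OF t body] sem_TLetmap[OF u]
      sem_lift1[OF u']
    using t u u' by (simp add: letmap_ar_let)
qed

lemma sem_let_let:
  assumes t: "typing G t (TyDia A)" and u: "typing (A # G) u (TyDia B)"
    and u': "typing (B # G) u' (TyDia C)"
  shows "Sem G (TLet (TLet t u) u') = Sem G (TLet t (TLet u (lift 1 u')))"
proof -
  have tu: "typing G (TLet t u) (TyDia B)" using t u by (rule ty_let)
  have body: "typing (A # G) (TLet u (lift 1 u')) (TyDia C)"
    using u u' by (blast intro: ty_let typing_lift1)
  show ?thesis
    unfolding sem_TLet[OF tu u'] sem_TLet[OF t u] sem_TLet[OF t body]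
      sem_TLet[OF u typing_lift1[OF u']] sem_lift1[OF u']
    using t u u' by (simp add: let_let)
qed

theorem sem_eqv: "eqv G t u A \<Longrightarrow> Sem G t = Sem G u"
proof (induction rule: eqv.induct)
  case (cg_fst \<Gamma> t t' A B)
  then show ?case using eqv_tyof[OF cg_fst(1)] by simp
next
  case (cg_snd \<Gamma> t t' A B)
  then show ?case using eqv_tyof[OF cg_snd(1)] by simp
next
  case (cg_app \<Gamma> t t' A B u u')
  then show ?case using eqv_tyof[OF cg_app(1)] by simp
next
  case (cg_letmap \<Gamma> t t' A u u' B)
  then show ?case using eqv_tyof[OF cg_letmap(1)] by simp
next
  case (cg_let \<Gamma> t t' A u u' B)
  then show ?case using eqv_tyof[OF cg_let(1)] eqv_tyof[OF cg_let(2)] by simp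
next
  case (ax_unit_eta \<Gamma> t)
  have "Sem \<Gamma> t = bang M (cobj \<Gamma>)" by (rule bang_unique) (use ax_unit_eta in simp_all)
  then show ?case by simp
next
  case (ax_pair_eta \<Gamma> t A B)
  then show ?case using tup_eta[of "Sem \<Gamma> t" "tobj A" "tobj B"] by (simp add: tyof_eq)
next
  case (ax_fst_beta \<Gamma> t A u B)
  then show ?case by (simp add: tyof_eq[OF typing.ty_pair[OF ax_fst_beta]])
next
  case (ax_snd_beta \<Gamma> t A u B)
  then show ?case by (simp add: tyof_eq[OF typing.ty_pair[OF ax_snd_beta]])
next
  case (ax_letmap_id \<Gamma> t A)
  show ?case
    unfolding sem_TLetmap[OF ax_letmap_id] using ax_letmap_id by (simp add: letmap_ar_pi2)
next
  case (ax_fun_eta \<Gamma> t A B)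
  then show ?case by (rule sem_fun_eta[symmetric])
next
  case (ax_fun_beta A \<Gamma> t B u)
  then show ?case by (rule sem_fun_beta)
next
  case (ax_letmap_letmap \<Gamma> t A u B u' C)
  then show ?case by (rule sem_letmap_letmap)
next
  case (ax_let_letmap \<Gamma> t A u B u' C)
  then show ?case by (rule sem_let_letmap)
next
  case (ax_letmap_let \<Gamma> t A u B u' C)
  then show ?case by (rule sem_letmap_let)
next
  case (ax_let_let \<Gamma> t A u B u' C)
  then show ?case by (rule sem_let_let)
qed simp_all

end

section \<open>The term model\<close>

text \<open>An arrow is an \<open>\<equiv>\<close>-class of terms, represented by a chosen member. Objects and arrows are
  coded as natural numbers because completeness is asserted for models over \<open>nat\<close>.\<close>

instance ty :: countable by countable_datatype
instance tm :: countable by countable_datatype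

definition class_rep :: "ty \<Rightarrow> ty \<Rightarrow> tm \<Rightarrow> tm" where
  "class_rep A B t = (SOME t'. eqv [A] t t' B)"

definition tm_ob :: "ty \<Rightarrow> nat" where
  "tm_ob A = to_nat A"

definition tm_ar :: "ty \<Rightarrow> ty \<Rightarrow> tm \<Rightarrow> nat" where
  "tm_ar A B t = to_nat (A, B, class_rep A B t)"

definition ob_ty :: "nat \<Rightarrow> ty" where
  "ob_ty X = from_nat X"

definition ar_dom :: "nat \<Rightarrow> ty" where
  "ar_dom f = fst (from_nat f :: ty \<times> ty \<times> tm)"

definition ar_cod :: "nat \<Rightarrow> ty" where
  "ar_cod f = fst (snd (from_nat f :: ty \<times> ty \<times> tm))"

definition ar_tm :: "nat \<Rightarrow> tm" where
  "ar_tm f = snd (snd (from_nat f :: ty \<times> ty \<times> tm))"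

lemma ob_ty_tm_ob [simp]: "ob_ty (tm_ob A) = A"
  by (simp add: ob_ty_def tm_ob_def)

lemma tm_ob_eq_iff [simp]: "tm_ob A = tm_ob B \<longleftrightarrow> A = B"
  by (simp add: tm_ob_def)

lemma tm_ar_components [simp]:
  "ar_dom (tm_ar A B t) = A" "ar_cod (tm_ar A B t) = B" "ar_tm (tm_ar A B t) = class_rep A B t"
  by (simp_all add: ar_dom_def ar_cod_def ar_tm_def tm_ar_def)

lemma eqv_class_rep: "typing [A] t B \<Longrightarrow> eqv [A] t (class_rep A B t) B"
  unfolding class_rep_def by (rule someI[of _ t]) (rule eq_refl)

lemma class_rep_cong: "eqv [A] t t' B \<Longrightarrow> class_rep A B t = class_rep A B t'"
proof -
  assume "eqv [A] t t' B"
  then have "(\<lambda>x. eqv [A] t x B) = (\<lambda>x. eqv [A] t' x B)" by (meson eq_sym eq_trans)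
  then show ?thesis unfolding class_rep_def by simp
qed

lemma tm_ar_eq_iff:
  assumes "typing [A] t B" "typing [A'] t' B'"
  shows "tm_ar A B t = tm_ar A' B' t' \<longleftrightarrow> A = A' \<and> B = B' \<and> eqv [A] t t' B"
proof
  assume "tm_ar A B t = tm_ar A' B' t'"
  then have eq: "A = A'" "B = B'" "class_rep A B t = class_rep A B t'" by (auto simp: tm_ar_def)
  have "eqv [A] t (class_rep A B t) B" using assms(1) by (rule eqv_class_rep)
  moreover have "eqv [A] t' (class_rep A B t') B" using assms(2) eq(1,2)
      by (simp add: eqv_class_rep)
  ultimately show "A = A' \<and> B = B' \<and> eqv [A] t t' B" using eq by (metis eq_sym eq_trans)
qed (auto simp: tm_ar_def class_rep_cong)

lemma tm_ar_eqI: "eqv [A] t t' B \<Longrightarrow> tm_ar A B t = tm_ar A B t'"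
  by (simp add: tm_ar_def class_rep_cong)

definition term_model :: "(nat, nat) sj_model" where
  "term_model = \<lparr> Ob = range tm_ob, Ar = {tm_ar A B t | A B t. typing [A] t B},
     sdom = (\<lambda>f. tm_ob (ar_dom f)), scod = (\<lambda>f. tm_ob (ar_cod f)),
     idm = (\<lambda>X. tm_ar (ob_ty X) (ob_ty X) (TVar 0)),
     cmp = (\<lambda>g f. tm_ar (ar_dom f) (ar_cod g) (subst 0 (ar_tm f) (ar_tm g))),
     trm = tm_ob TyUnit, bang = (\<lambda>X. tm_ar (ob_ty X) TyUnit TUnit),
     prd = (\<lambda>X Y. tm_ob (TyProd (ob_ty X) (ob_ty Y))),
     pi1 = (\<lambda>X Y. tm_ar (TyProd (ob_ty X) (ob_ty Y)) (ob_ty X) (TFst (TVar 0))),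
     pi2 = (\<lambda>X Y. tm_ar (TyProd (ob_ty X) (ob_ty Y)) (ob_ty Y) (TSnd (TVar 0))),
     tup = (\<lambda>f g. tm_ar (ar_dom f) (TyProd (ar_cod f) (ar_cod g)) (TPair (ar_tm f) (ar_tm g))),
     expo = (\<lambda>X Y. tm_ob (TyArr (ob_ty X) (ob_ty Y))),
     evl = (\<lambda>X Y. tm_ar (TyProd (TyArr (ob_ty X) (ob_ty Y)) (ob_ty X)) (ob_ty Y)
               (TApp (TFst (TVar 0)) (TSnd (TVar 0)))),
     cur = (\<lambda>Z X f. tm_ar (ob_ty Z) (TyArr (ob_ty X) (ar_cod f))
               (TLam (ob_ty X) (subst 0 (TPair (TVar (Suc 0)) (TVar 0)) (ar_tm f)))),
     Dob = (\<lambda>X. tm_ob (TyDia (ob_ty X))),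
     Dar = (\<lambda>f. tm_ar (TyDia (ar_dom f)) (TyDia (ar_cod f)) (TLetmap (TVar 0) (ar_tm f))),
     st = (\<lambda>X Y. tm_ar (TyProd (ob_ty X) (TyDia (ob_ty Y))) (TyDia (TyProd (ob_ty X) (ob_ty Y)))
               (TLetmap (TSnd (TVar 0)) (TPair (TFst (TVar (Suc 0))) (TVar 0)))),
     mu = (\<lambda>X. tm_ar (TyDia (TyDia (ob_ty X))) (TyDia (ob_ty X)) (TLet (TVar 0) (TVar 0))) \<rparr>"

lemma term_model_simps [simp]:
  "Ob term_model = range tm_ob" "Ar term_model = {tm_ar A B t | A B t. typing [A] t B}"
  "sdom term_model f = tm_ob (ar_dom f)" "scod term_model f = tm_ob (ar_cod f)"
  "idm term_model X = tm_ar (ob_ty X) (ob_ty X) (TVar 0)"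
  "trm term_model = tm_ob TyUnit" "bang term_model X = tm_ar (ob_ty X) TyUnit TUnit"
  "prd term_model X Y = tm_ob (TyProd (ob_ty X) (ob_ty Y))"
  "pi1 term_model X Y = tm_ar (TyProd (ob_ty X) (ob_ty Y)) (ob_ty X) (TFst (TVar 0))"
  "pi2 term_model X Y = tm_ar (TyProd (ob_ty X) (ob_ty Y)) (ob_ty Y) (TSnd (TVar 0))"
  "expo term_model X Y = tm_ob (TyArr (ob_ty X) (ob_ty Y))"
  "evl term_model X Y = tm_ar (TyProd (TyArr (ob_ty X) (ob_ty Y)) (ob_ty X)) (ob_ty Y)
     (TApp (TFst (TVar 0)) (TSnd (TVar 0)))"
  "Dob term_model X = tm_ob (TyDia (ob_ty X))"
  "st term_model X Y = tm_ar (TyProd (ob_ty X) (TyDia (ob_ty Y))) (TyDia (TyProd (ob_ty X) (ob_ty Y)))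
     (TLetmap (TSnd (TVar 0)) (TPair (TFst (TVar (Suc 0))) (TVar 0)))"
  "mu term_model X = tm_ar (TyDia (TyDia (ob_ty X))) (TyDia (ob_ty X)) (TLet (TVar 0) (TVar 0))"
  by (simp_all add: term_model_def)

lemma cmp_tm_ar:
  assumes "typing [A] f B" and "typing [B] g C"
  shows "cmp term_model (tm_ar B C g) (tm_ar A B f) = tm_ar A C (subst 0 f g)"
proof -
  have "eqv [A] (subst 0 (class_rep A B f) (class_rep B C g)) (subst 0 f g) C"
    by (rule eqv_compose[OF eq_sym[OF eqv_class_rep[OF assms(2)]]
        eq_sym[OF eqv_class_rep[OF assms(1)]]])
  then show ?thesis by (simp add: term_model_def tm_ar_eqI)
qed

lemma tup_tm_ar:
  assumes "typing [A] f B" and "typing [A] g C"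
  shows "tup term_model (tm_ar A B f) (tm_ar A C g) = tm_ar A (TyProd B C) (TPair f g)"
  using assms by (simp add: term_model_def tm_ar_eqI cg_pair eqv_class_rep eq_sym)

lemma cur_tm_ar:
  assumes "typing [TyProd Z X] f Y"
  shows "cur term_model (tm_ob Z) (tm_ob X) (tm_ar (TyProd Z X) Y f)
    = tm_ar Z (TyArr X Y) (TLam X (subst 0 (TPair (TVar (Suc 0)) (TVar 0)) f))"
proof -
  have "eqv [X, Z] (TPair (TVar (Suc 0)) (TVar 0)) (TPair (TVar (Suc 0)) (TVar 0)) (TyProd Z X)"
    by (rule eq_refl) (simp add: typing_simps)
  then have "eqv [Z] (TLam X (subst 0 (TPair (TVar (Suc 0)) (TVar 0)) (class_rep (TyProd Z X) Y f)))
      (TLam X (subst 0 (TPair (TVar (Suc 0)) (TVar 0)) f)) (TyArr X Y)"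
    by (rule cg_lam[OF eqv_compose[OF eq_sym[OF eqv_class_rep[OF assms]]]])
  then show ?thesis by (simp add: term_model_def tm_ar_eqI)
qed

lemma Dar_tm_ar:
  assumes "typing [A] f B"
  shows "Dar term_model (tm_ar A B f) = tm_ar (TyDia A) (TyDia B) (TLetmap (TVar 0) f)"
proof -
  have "eqv [A, TyDia A] (class_rep A B f) f B"
    using eqv_msubst[OF eq_sym[OF eqv_class_rep[OF assms]], of "A # [TyDia A]" TVar]
    by (simp add: typing_simps)
  moreover have "typing [TyDia A] (TVar 0) (TyDia A)" by (simp add: typing_simps)
  ultimately have "eqv [TyDia A] (TLetmap (TVar 0) (class_rep A B f)) (TLetmap (TVar 0) f)
      (TyDia B)"
    by (metis cg_letmap eq_refl)
  then show ?thesis by (simp add: term_model_def tm_ar_eqI)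
qed

lemma term_model_homE:
  assumes "f \<in> hom term_model X Y"
  obtains A B t where "f = tm_ar A B t" "typing [A] t B" "X = tm_ob A" "Y = tm_ob B"
  using assms by (auto simp: hom_def)

lemma tm_ar_hom [simp]: "typing [A] t B \<Longrightarrow> tm_ar A B t \<in> hom term_model (tm_ob A) (tm_ob B)"
  by (auto simp: hom_def)

lemma term_model_ObE:
  assumes "X \<in> Ob term_model"
  obtains A where "X = tm_ob A"
  using assms by auto

lemma term_model_category: "is_category term_model"
  unfolding is_category_def
proof (intro conjI allI ballI impI)
  fix X assume "X \<in> Ob term_model"
  then obtain A where "X = tm_ob A" by (rule term_model_ObE)
  then show "idm term_model X \<in> hom term_model X X" by (simp add: typing_simps)
next
  fix X Y Z f g assume "f \<in> hom term_model X Y" "g \<in> hom term_model Y Z"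
  then show "cmp term_model g f \<in> hom term_model X Z"
    by (auto elim!: term_model_homE simp: cmp_tm_ar typing_compose)
next
  fix X Y f assume "f \<in> hom term_model X Y"
  then obtain A B t where f: "f = tm_ar A B t" "typing [A] t B" "X = tm_ob A" "Y = tm_ob B"
    by (rule term_model_homE)
  have v: "typing [C] (TVar 0) C" for C by (simp add: typing_simps)
  show "cmp term_model f (idm term_model X) = f"
    using f cmp_tm_ar[OF v f(2)] tm_ar_eqI[OF subst0_TVar0_eqv[OF f(2)]] by simp
  show "cmp term_model (idm term_model Y) f = f"
    using f cmp_tm_ar[OF f(2) v] by simp
next
  fix W X Y Z f g h assume "f \<in> hom term_model W X" "g \<in> hom term_model X Y"
      "h \<in> hom term_model Y Z"
  then obtain A B C D t u v where "f = tm_ar A B t" "g = tm_ar B C u" "h = tm_ar C D v"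
    and tuv: "typing [A] t B" "typing [B] u C" "typing [C] v D"
    by (auto elim!: term_model_homE)
  then show "cmp term_model h (cmp term_model g f) = cmp term_model (cmp term_model h g) f"
    using tm_ar_eqI[OF subst0_subst0_eqv[OF tuv]] by (simp add: cmp_tm_ar typing_compose)
qed auto

lemma term_model_terminal: "has_terminal term_model"
  unfolding has_terminal_def
proof (intro conjI ballI)
  fix X assume "X \<in> Ob term_model"
  then obtain A where "X = tm_ob A" by (rule term_model_ObE)
  then show "bang term_model X \<in> hom term_model X (trm term_model)"
    using tm_ar_hom[OF typing.ty_unit[of "[A]"]] by simp
next
  fix X f assume "X \<in> Ob term_model" "f \<in> hom term_model X (trm term_model)"
  then obtain A t where "f = tm_ar A TyUnit t" "typing [A] t TyUnit" "X = tm_ob A"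
    by (auto elim!: term_model_homE)
  then show "f = bang term_model X" by (simp add: tm_ar_eqI ax_unit_eta)
qed simp

lemma term_model_products: "has_products term_model"
  unfolding has_products_def
proof (intro conjI ballI allI impI)
  fix X Y assume "X \<in> Ob term_model" "Y \<in> Ob term_model"
  then obtain A B where A: "X = tm_ob A" and B: "Y = tm_ob B" by (meson term_model_ObE)
  have fst: "typing [TyProd A B] (TFst (TVar 0)) A" and snd: "typing [TyProd A B] (TSnd (TVar 0)) B"
    by (auto simp: typing_simps)
  show "prd term_model X Y \<in> Ob term_model" by simp
  show "pi1 term_model X Y \<in> hom term_model (prd term_model X Y) X"
    using A B tm_ar_hom[OF fst] by simp
  show "pi2 term_model X Y \<in> hom term_model (prd term_model X Y) Y"
    using A B tm_ar_hom[OF snd] by simp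
  {
    fix Z f g assume "f \<in> hom term_model Z X" "g \<in> hom term_model Z Y"
    then obtain C t u where fg: "f = tm_ar C A t" "g = tm_ar C B u" "Z = tm_ob C"
      and t: "typing [C] t A" and u: "typing [C] u B"
      using A B by (auto elim!: term_model_homE)
    have tu: "typing [C] (TPair t u) (TyProd A B)" using t u by (rule ty_pair)
    show "tup term_model f g \<in> hom term_model Z (prd term_model X Y)"
      using fg A B tu by (simp add: tup_tm_ar t u)
    show "cmp term_model (pi1 term_model X Y) (tup term_model f g) = f"
      using fg A B cmp_tm_ar[OF tu fst] tm_ar_eqI[OF ax_fst_beta[OF t u]]
      by (simp add: tup_tm_ar t u)
    show "cmp term_model (pi2 term_model X Y) (tup term_model f g) = g"
      using fg A B cmp_tm_ar[OF tu snd] tm_ar_eqI[OF ax_snd_beta[OF t u]]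
      by (simp add: tup_tm_ar t u)
  }
  {
    fix Z h assume "h \<in> hom term_model Z (prd term_model X Y)"
    then obtain C w where h: "h = tm_ar C (TyProd A B) w" "Z = tm_ob C" and w:
        "typing [C] w (TyProd A B)"
      using A B by (auto elim!: term_model_homE)
    have "typing [C] (TFst w) A" "typing [C] (TSnd w) B" using w by (auto intro: ty_fst ty_snd)
    then show "h = tup term_model (cmp term_model (pi1 term_model X Y) h)
        (cmp term_model (pi2 term_model X Y) h)"
      using h A B cmp_tm_ar[OF w fst] cmp_tm_ar[OF w snd] tm_ar_eqI[OF ax_pair_eta[OF w]]
      by (simp add: tup_tm_ar)
  }
qed

lemma parr_idm_tm_ar:
  assumes "typing [C] w D"
  shows "parr term_model (tm_ob C) (tm_ob A) (tm_ar C D w) (idm term_model (tm_ob A))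
     = tm_ar (TyProd C A) (TyProd D A) (TPair (subst 0 (TFst (TVar 0)) w) (TSnd (TVar 0)))"
proof -
  have "typing [TyProd C A] (TFst (TVar 0)) C" "typing [TyProd C A] (TSnd (TVar 0)) A"
    "typing [A] (TVar 0) A" by (auto simp: typing_simps)
  with assms show ?thesis
    unfolding parr_def by (simp add: cmp_tm_ar tup_tm_ar typing_compose)
qed

lemma evl_parr_tm_ar:
  assumes w: "typing [C] w (TyArr A B)"
  shows "cmp term_model (evl term_model (tm_ob A) (tm_ob B))
      (parr term_model (tm_ob C) (tm_ob A) (tm_ar C (TyArr A B) w) (idm term_model (tm_ob A)))
     = tm_ar (TyProd C A) B (TApp (subst 0 (TFst (TVar 0)) w) (TSnd (TVar 0)))"
proof -
  let ?w = "subst 0 (TFst (TVar 0)) w"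
  have w': "typing [TyProd C A] ?w (TyArr A B)" and snd: "typing [TyProd C A] (TSnd (TVar 0)) A"
    using w by (auto intro: typing_compose simp: typing_simps)
  have "eqv [TyProd C A] (TApp (TFst (TPair ?w (TSnd (TVar 0)))) (TSnd (TPair ?w (TSnd (TVar 0)))))
      (TApp ?w (TSnd (TVar 0))) B"
    by (rule cg_app[OF ax_fst_beta[OF w' snd] ax_snd_beta[OF w' snd]])
  moreover have "typing [TyProd (TyArr A B) A] (TApp (TFst (TVar 0)) (TSnd (TVar 0))) B"
    by (auto simp: typing_simps)
  ultimately show ?thesis
    using parr_idm_tm_ar[OF w, of A] cmp_tm_ar[OF ty_pair[OF w' snd]] by (simp add: tm_ar_eqI)
qed

lemma evl_parr_cur_tm_ar:
  assumes t: "typing [TyProd C A] t B"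
  shows "cmp term_model (evl term_model (tm_ob A) (tm_ob B)) (parr term_model (tm_ob C) (tm_ob A)
      (cur term_model (tm_ob C) (tm_ob A) (tm_ar (TyProd C A) B t)) (idm term_model (tm_ob A)))
    = tm_ar (TyProd C A) B t"
proof -
  let ?body = "subst 0 (TPair (TVar (Suc 0)) (TVar 0)) t"
  have body: "typing [A, C] ?body B"
    using t by (rule typing_compose) (simp add: typing_simps)
  let ?body' = "subst (Suc 0) (TFst (TVar (Suc 0))) ?body"
  have "typing [TyProd C A] (subst 0 (TFst (TVar 0)) (TLam A ?body)) (TyArr A B)"
    by (rule typing_compose[OF typing.ty_lam[OF body]]) (simp add: typing_simps)
  then have "typing [A, TyProd C A] ?body' B" by (simp add: typing_simps)
  then have "eqv [TyProd C A] (TApp (subst 0 (TFst (TVar 0)) (TLam A ?body)) (TSnd (TVar 0)))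
      (subst 0 (TSnd (TVar 0)) ?body') B"
    by (simp add: ax_fun_beta typing_simps)
  also have "subst 0 (TSnd (TVar 0)) ?body'
      = msubst (\<lambda>i. subst 0 (TSnd (TVar 0))
          (subst (Suc 0) (TFst (TVar (Suc 0))) (subst_var 0 (TPair (TVar (Suc 0)) (TVar 0)) i))) t"
    by (simp add: subst_eq_msubst msubst_msubst)
  also have "eqv [TyProd C A] \<dots> (msubst TVar t) B"
    by (rule eqv_msubst_single[OF t]) (simp add: eq_sym ax_pair_eta typing_simps)
  finally show ?thesis
    using evl_parr_tm_ar[OF typing.ty_lam[OF body]] cur_tm_ar[OF t] by (simp add: tm_ar_eqI)
qed

lemma cur_evl_parr_tm_ar:
  assumes w: "typing [C] w (TyArr A B)"
  shows "cur term_model (tm_ob C) (tm_ob A) (cmp term_model (evl term_model (tm_ob A) (tm_ob B))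
      (parr term_model (tm_ob C) (tm_ob A) (tm_ar C (TyArr A B) w) (idm term_model (tm_ob A))))
    = tm_ar C (TyArr A B) w"
proof -
  let ?e = "TApp (subst 0 (TFst (TVar 0)) w) (TSnd (TVar 0))"
  have e: "typing [TyProd C A] ?e B"
    using w by (auto intro!: typing.ty_app typing_compose simp: typing_simps)
  have "eqv [A, C] (subst 0 (TPair (TVar (Suc 0)) (TVar 0)) ?e) (TApp (lift 0 w) (TVar 0)) B"
  proof -
    have "eqv [A, C] (subst 0 (TPair (TVar (Suc 0)) (TVar 0)) (subst 0 (TFst (TVar 0)) w))
        (msubst (TVar \<circ> Suc) w) (TyArr A B)"
      unfolding subst_eq_msubst msubst_msubst
      by (rule eqv_msubst_single[OF w]) (simp add: ax_fst_beta typing_simps)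
    moreover have "eqv [A, C] (TSnd (TPair (TVar (Suc 0)) (TVar 0))) (TVar 0) A"
      by (rule ax_snd_beta) (simp_all add: typing_simps)
    ultimately show ?thesis by (simp add: cg_app lift0_eq_ren ren_eq_msubst)
  qed
  then have "eqv [C] (TLam A (subst 0 (TPair (TVar (Suc 0)) (TVar 0)) ?e)) w (TyArr A B)"
    using eq_sym[OF ax_fun_eta[OF w]] by (blast intro: cg_lam eq_trans)
  then show ?thesis
    using evl_parr_tm_ar[OF w] cur_tm_ar[OF e] by (simp add: tm_ar_eqI)
qed

lemma term_model_exponentials: "has_exponentials term_model"
  unfolding has_exponentials_def
proof (intro conjI ballI allI impI)
  fix X Y assume "X \<in> Ob term_model" "Y \<in> Ob term_model"
  then obtain A B where A: "X = tm_ob A" and B: "Y = tm_ob B" by (meson term_model_ObE)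
  show "expo term_model X Y \<in> Ob term_model" by simp
  have "typing [TyProd (TyArr A B) A] (TApp (TFst (TVar 0)) (TSnd (TVar 0))) B"
    by (auto simp: typing_simps)
  then show "evl term_model X Y \<in> hom term_model (prd term_model (expo term_model X Y) X) Y"
    using A B tm_ar_hom by fastforce
  fix Z assume "Z \<in> Ob term_model"
  then obtain C where C: "Z = tm_ob C" by (rule term_model_ObE)
  {
    fix f assume "f \<in> hom term_model (prd term_model Z X) Y"
    then obtain t where f: "f = tm_ar (TyProd C A) B t" and t: "typing [TyProd C A] t B"
      using A B C by (auto elim!: term_model_homE)
    have "typing [C] (TLam A (subst 0 (TPair (TVar (Suc 0)) (TVar 0)) t)) (TyArr A B)"
      using t by (auto intro!: typing.ty_lam typing_compose simp: typing_simps)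
    then show "cur term_model Z X f \<in> hom term_model Z (expo term_model X Y)"
      using A B C f cur_tm_ar[OF t] by simp
    show "cmp term_model (evl term_model X Y)
        (parr term_model Z X (cur term_model Z X f) (idm term_model X)) = f"
      using A B C f evl_parr_cur_tm_ar[OF t] by simp
  }
  {
    fix h assume "h \<in> hom term_model Z (expo term_model X Y)"
    then obtain w where h: "h = tm_ar C (TyArr A B) w" and w: "typing [C] w (TyArr A B)"
      using A B C by (auto elim!: term_model_homE)
    show "cur term_model Z X (cmp term_model (evl term_model X Y)
        (parr term_model Z X h (idm term_model X))) = h"
      using A B C h cur_evl_parr_tm_ar[OF w] by simp
  }
qed

section \<open>The strong semimonad of the term model\<close>

fun reduce_fst :: "tm \<Rightarrow> tm" where
  "reduce_fst (TPair t u) = t"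
| "reduce_fst t = TFst t"

fun reduce_snd :: "tm \<Rightarrow> tm" where
  "reduce_snd (TPair t u) = u"
| "reduce_snd t = TSnd t"

fun reduce_letmap :: "tm \<Rightarrow> tm \<Rightarrow> tm" where
  "reduce_letmap (TLetmap t u) u' = TLetmap t (subst 0 u (lift 1 u'))"
| "reduce_letmap (TLet t u) u' = TLet t (TLetmap u (lift 1 u'))"
| "reduce_letmap t u' = (if u' = TVar 0 then t else TLetmap t u')"

fun reduce_let :: "tm \<Rightarrow> tm \<Rightarrow> tm" where
  "reduce_let (TLetmap t u) u' = TLet t (subst 0 u (lift 1 u'))"
| "reduce_let (TLet t u) u' = TLet t (TLet u (lift 1 u'))"
| "reduce_let t u' = TLet t u'"

text \<open>Iterated a fixed number of times it
  decides the equations of the term model needed for the strong semimonad laws.\<close>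

fun norm_step :: "tm \<Rightarrow> tm" where
  "norm_step (TVar i) = TVar i"
| "norm_step TUnit = TUnit"
| "norm_step (TPair t u) = TPair (norm_step t) (norm_step u)"
| "norm_step (TFst t) = reduce_fst (norm_step t)"
| "norm_step (TSnd t) = reduce_snd (norm_step t)"
| "norm_step (TLam A t) = TLam A t"
| "norm_step (TApp t u) = TApp (norm_step t) (norm_step u)"
| "norm_step (TLetmap t u) = reduce_letmap (norm_step t) (norm_step u)"
| "norm_step (TLet t u) = reduce_let (norm_step t) (norm_step u)"

fun norm_steps :: "nat \<Rightarrow> tm \<Rightarrow> tm" where
  "norm_steps 0 t = t"
| "norm_steps (Suc n) t = norm_steps n (norm_step t)"

lemma norm_steps_numeral [simp]:
    "norm_steps (numeral k) t = norm_steps (pred_numeral k) (norm_step t)"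
  by (simp add: numeral_eq_Suc)

lemma reduce_fst_eqv:
  assumes "typing G t (TyProd A B)"
  shows "eqv G (TFst t) (reduce_fst t) A"
proof (cases "\<exists>t1 t2. t = TPair t1 t2")
  case True
  then obtain t1 t2 where [simp]: "t = TPair t1 t2" by blast
  from assms have "typing G t1 A" "typing G t2 B" by (auto elim: typing_elims)
  then show ?thesis by (simp add: ax_fst_beta)
next
  case False
  then have "reduce_fst t = TFst t" by (cases t) auto
  with assms show ?thesis by (auto intro: eq_refl typing.ty_fst)
qed

lemma reduce_snd_eqv:
  assumes "typing G t (TyProd A B)"
  shows "eqv G (TSnd t) (reduce_snd t) B"
proof (cases "\<exists>t1 t2. t = TPair t1 t2")
  case True
  then obtain t1 t2 where [simp]: "t = TPair t1 t2" by blast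
  from assms have "typing G t1 A" "typing G t2 B" by (auto elim: typing_elims)
  then show ?thesis by (simp add: ax_snd_beta)
next
  case False
  then have "reduce_snd t = TSnd t" by (cases t) auto
  with assms show ?thesis by (auto intro: eq_refl typing.ty_snd)
qed

lemma reduce_letmap_eqv:
  assumes t: "typing G t (TyDia A)" and u: "typing (A # G) u B"
  shows "eqv G (TLetmap t u) (reduce_letmap t u) (TyDia B)"
proof (cases "\<exists>t1 u1. t = TLetmap t1 u1 \<or> t = TLet t1 u1")
  case True
  with t u show ?thesis
    by (auto elim!: typing_elims intro: ax_letmap_letmap[unfolded One_nat_def]
        ax_letmap_let[unfolded One_nat_def])
next
  case False
  then have "reduce_letmap t u = (if u = TVar 0 then t else TLetmap t u)"
    by (cases t) auto
  moreover have "eqv G (TLetmap t (TVar 0)) t (TyDia A)" using t by (rule eq_sym[OF ax_letmap_id])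
  moreover have "u = TVar 0 \<Longrightarrow> B = A" using u by (auto elim: typing_elims)
  ultimately show ?thesis
    using t u by (auto intro: eq_refl typing.ty_letmap)
qed

lemma reduce_let_eqv:
  assumes t: "typing G t (TyDia A)" and u: "typing (A # G) u (TyDia B)"
  shows "eqv G (TLet t u) (reduce_let t u) (TyDia B)"
proof (cases "\<exists>t1 u1. t = TLetmap t1 u1 \<or> t = TLet t1 u1")
  case True
  with t u show ?thesis
    by (auto elim!: typing_elims intro: ax_let_letmap[unfolded One_nat_def]
        ax_let_let[unfolded One_nat_def])
next
  case False
  then have "reduce_let t u = TLet t u" by (cases t) auto
  then show ?thesis using t u by (auto intro: eq_refl typing.ty_let)
qed

lemma norm_step_eqv: "typing G t A \<Longrightarrow> eqv G t (norm_step t) A"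
proof (induction rule: typing.induct)
  case (ty_fst \<Gamma> t A B)
  have "typing \<Gamma> (norm_step t) (TyProd A B)" using eqv_typing[OF ty_fst.IH] by simp
  then have "eqv \<Gamma> (TFst (norm_step t)) (reduce_fst (norm_step t)) A" by (rule reduce_fst_eqv)
  with cg_fst[OF ty_fst.IH] show ?case by (simp add: eq_trans)
next
  case (ty_snd \<Gamma> t A B)
  have "typing \<Gamma> (norm_step t) (TyProd A B)" using eqv_typing[OF ty_snd.IH] by simp
  then have "eqv \<Gamma> (TSnd (norm_step t)) (reduce_snd (norm_step t)) B" by (rule reduce_snd_eqv)
  with cg_snd[OF ty_snd.IH] show ?case by (simp add: eq_trans)
next
  case (ty_letmap \<Gamma> t A u B)
  have "typing \<Gamma> (norm_step t) (TyDia A)" "typing (A # \<Gamma>) (norm_step u) B"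
    using eqv_typing[OF ty_letmap.IH(1)] eqv_typing[OF ty_letmap.IH(2)] by simp_all
  then have "eqv \<Gamma> (TLetmap (norm_step t) (norm_step u))
      (reduce_letmap (norm_step t) (norm_step u)) (TyDia B)"
    by (rule reduce_letmap_eqv)
  with cg_letmap[OF ty_letmap.IH] show ?case by (simp add: eq_trans)
next
  case (ty_let \<Gamma> t A u B)
  have "typing \<Gamma> (norm_step t) (TyDia A)" "typing (A # \<Gamma>) (norm_step u) (TyDia B)"
    using eqv_typing[OF ty_let.IH(1)] eqv_typing[OF ty_let.IH(2)] by simp_all
  then have "eqv \<Gamma> (TLet (norm_step t) (norm_step u)) (reduce_let (norm_step t) (norm_step u))
      (TyDia B)"
    by (rule reduce_let_eqv)
  with cg_let[OF ty_let.IH] show ?case by (simp add: eq_trans)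
next
  case (ty_app \<Gamma> t A B u)
  then show ?case by (simp add: cg_app)
next
  case (ty_pair \<Gamma> t A u B)
  then show ?case by (simp add: cg_pair)
qed (auto intro: eq_refl typing.intros)

lemma norm_steps_eqv: "typing G t A \<Longrightarrow> eqv G t (norm_steps n t) A"
proof (induction n arbitrary: t)
  case (Suc n)
  have "eqv G t (norm_step t) A" using Suc.prems by (rule norm_step_eqv)
  moreover have "eqv G (norm_step t) (norm_steps n (norm_step t)) A"
    using Suc.IH eqv_typing calculation by blast
  ultimately show ?case by (simp add: eq_trans)
qed (simp add: eq_refl)

lemma tm_ar_eq_by_norm:
  "typing [A] t B \<Longrightarrow> typing [A] u B \<Longrightarrow> norm_steps n t = norm_steps n u \<Longrightarrow> tm_ar A B t = tm_ar A B u"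
  by (metis tm_ar_eqI norm_steps_eqv eq_sym eq_trans)

text \<open>Writing an arrow \<open>p\<close> as \<open>(\<lambda>x. p) x\<close> with the abstraction closed turns \<open>p\<close> into a constant:
  it is invariant under substitution and normalisation, so equations between composites of
  arbitrary arrows can still be decided by the normaliser.\<close>

definition closed_lam :: "ty \<Rightarrow> tm \<Rightarrow> tm" where
  "closed_lam A p = TLam A (msubst (\<lambda>_. TVar 0) p)"

lemma closed_lam_invariant [simp]:
  "msubst s (closed_lam A p) = closed_lam A p" "ren r (closed_lam A p) = closed_lam A p"
  "lift k (closed_lam A p) = closed_lam A p" "subst k s' (closed_lam A p) = closed_lam A p"
  "norm_step (closed_lam A p) = closed_lam A p"
  by (simp_all add: closed_lam_def msubst_msubst ren_msubst comp_def lift_eq_ren subst_eq_msubst)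

lemma typing_closed_lam_iff [simp]: "typing [A] p B \<Longrightarrow> typing G (closed_lam A p) T \<longleftrightarrow> T = TyArr A B"
proof -
  assume p: "typing [A] p B"
  have "typing G (closed_lam A p) (TyArr A B)"
    unfolding closed_lam_def by (rule ty_lam, rule typing_msubst_single[OF p])
        (simp add: typing_simps)
  then show ?thesis using typing_unique by blast
qed

lemma closed_lam_beta:
  assumes p: "typing [A] p B" and s: "typing G s A"
  shows "eqv G (TApp (closed_lam A p) s) (subst 0 s p) B"
proof -
  have "typing (A # G) (msubst (\<lambda>_. TVar 0) p) B"
    by (rule typing_msubst_single[OF p]) (simp add: typing_simps)
  then have "eqv G (TApp (closed_lam A p) s) (subst 0 s (msubst (\<lambda>_. TVar 0) p)) B"
    unfolding closed_lam_def using s by (rule ax_fun_beta)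
  also have "subst 0 s (msubst (\<lambda>_. TVar 0) p) = msubst (\<lambda>_. s) p"
    by (simp add: subst_eq_msubst msubst_msubst)
  also have "eqv G (msubst (\<lambda>_. s) p) (subst 0 s p) B"
    unfolding subst_eq_msubst by (rule eqv_msubst_single[OF p]) (simp add: s eq_refl)
  finally show ?thesis .
qed

lemma closed_lam_var_eqv:
  assumes p: "typing [A] p B"
  shows "eqv [A] p (TApp (closed_lam A p) (TVar 0)) B"
proof -
  have "eqv [A] (TApp (closed_lam A p) (TVar 0)) (subst 0 (TVar 0) p) B"
    by (rule closed_lam_beta[OF p]) (simp add: typing_simps)
  from eq_trans[OF this subst0_TVar0_eqv[OF p]] show ?thesis by (rule eq_sym)
qed

lemma tm_ar_closed_lam: "typing [A] p B \<Longrightarrow> tm_ar A B p = tm_ar A B (TApp (closed_lam A p) (TVar 0))"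
  by (rule tm_ar_eqI[OF closed_lam_var_eqv])

lemma Dar_idm_tm:
  "Dar term_model (idm term_model (tm_ob A)) = idm term_model (Dob term_model (tm_ob A))"
  by (simp add: typing_simps Dar_tm_ar) (rule tm_ar_eq_by_norm[where n = 1]; simp add: typing_simps)

lemma Dar_cmp_tm:
  assumes p: "typing [A] p B" and q: "typing [B] q C"
  shows "Dar term_model (cmp term_model (tm_ar B C q) (tm_ar A B p))
    = cmp term_model (Dar term_model (tm_ar B C q)) (Dar term_model (tm_ar A B p))"
  unfolding tm_ar_closed_lam[OF p] tm_ar_closed_lam[OF q] using p q
  by (simp add: typing_simps Dar_tm_ar cmp_tm_ar)
      (rule tm_ar_eq_by_norm[where n = 4]; simp add: typing_simps)

lemma st_nat_tm:
  assumes p: "typing [A] p A'" and q: "typing [B] q B'"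
  shows "cmp term_model (st term_model (tm_ob A') (tm_ob B'))
      (parr term_model (tm_ob A) (Dob term_model (tm_ob B)) (tm_ar A A' p)
          (Dar term_model (tm_ar B B' q)))
    = cmp term_model (Dar term_model
        (parr term_model (tm_ob A) (tm_ob B) (tm_ar A A' p) (tm_ar B B' q)))
      (st term_model (tm_ob A) (tm_ob B))"
  unfolding tm_ar_closed_lam[OF p] tm_ar_closed_lam[OF q] using p q
  by (simp add: typing_simps Dar_tm_ar cmp_tm_ar tup_tm_ar parr_def)
     (rule tm_ar_eq_by_norm[where n = 8]; simp add: typing_simps)

lemma st_unit_tm:
  "cmp term_model (Dar term_model (pi2 term_model (trm term_model) (tm_ob A)))
      (st term_model (trm term_model) (tm_ob A))
    = pi2 term_model (trm term_model) (Dob term_model (tm_ob A))"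
  by (simp add: typing_simps Dar_tm_ar cmp_tm_ar)
      (rule tm_ar_eq_by_norm[where n = 6]; simp add: typing_simps)

lemma st_assoc_tm:
  "cmp term_model (Dar term_model (alpha term_model (tm_ob A) (tm_ob B) (tm_ob C)))
      (st term_model (prd term_model (tm_ob A) (tm_ob B)) (tm_ob C))
   = cmp term_model (st term_model (tm_ob A) (prd term_model (tm_ob B) (tm_ob C)))
      (cmp term_model (parr term_model (tm_ob A)
          (prd term_model (tm_ob B) (Dob term_model (tm_ob C)))
        (idm term_model (tm_ob A)) (st term_model (tm_ob B) (tm_ob C)))
      (alpha term_model (tm_ob A) (tm_ob B) (Dob term_model (tm_ob C))))"
  by (simp add: typing_simps Dar_tm_ar cmp_tm_ar tup_tm_ar alpha_def parr_def)
     (rule tm_ar_eq_by_norm[where n = 8]; simp add: typing_simps)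

lemma mu_nat_tm:
  assumes p: "typing [A] p B"
  shows "cmp term_model (mu term_model (tm_ob B)) (Dar term_model (Dar term_model (tm_ar A B p)))
    = cmp term_model (Dar term_model (tm_ar A B p)) (mu term_model (tm_ob A))"
  unfolding tm_ar_closed_lam[OF p] using p
  by (simp add: typing_simps Dar_tm_ar cmp_tm_ar)
      (rule tm_ar_eq_by_norm[where n = 8]; simp add: typing_simps)

lemma mu_assoc_tm:
  "cmp term_model (mu term_model (tm_ob A)) (mu term_model (Dob term_model (tm_ob A)))
    = cmp term_model (mu term_model (tm_ob A)) (Dar term_model (mu term_model (tm_ob A)))"
  by (simp add: typing_simps Dar_tm_ar cmp_tm_ar)
      (rule tm_ar_eq_by_norm[where n = 8]; simp add: typing_simps)

lemma mu_st_tm: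
  "cmp term_model (mu term_model (prd term_model (tm_ob A) (tm_ob B)))
      (cmp term_model (Dar term_model (st term_model (tm_ob A) (tm_ob B)))
          (st term_model (tm_ob A) (Dob term_model (tm_ob B))))
   = cmp term_model (st term_model (tm_ob A) (tm_ob B))
      (parr term_model (tm_ob A) (Dob term_model (Dob term_model (tm_ob B)))
          (idm term_model (tm_ob A)) (mu term_model (tm_ob B)))"
  by (simp add: typing_simps Dar_tm_ar cmp_tm_ar tup_tm_ar parr_def)
     (rule tm_ar_eq_by_norm[where n = 8]; simp add: typing_simps)

lemma term_model_endofunctor: "is_endofunctor term_model"
  unfolding is_endofunctor_def
proof (intro conjI ballI allI impI)
  fix X assume "X \<in> Ob term_model"
  then obtain A where "X = tm_ob A" by (rule term_model_ObE)
  then show "Dob term_model X \<in> Ob term_model"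
      "Dar term_model (idm term_model X) = idm term_model (Dob term_model X)"
    using Dar_idm_tm by simp_all
next
  fix X Y f assume "f \<in> hom term_model X Y"
  then obtain A B p where "f = tm_ar A B p" "typing [A] p B" "X = tm_ob A" "Y = tm_ob B"
    by (rule term_model_homE)
  moreover have "typing [TyDia A] (TLetmap (TVar 0) p) (TyDia B)"
    using calculation by (simp add: typing_simps typing_extend)
  ultimately show "Dar term_model f \<in> hom term_model (Dob term_model X) (Dob term_model Y)"
    by (simp add: Dar_tm_ar)
next
  fix X Y Z f g assume "f \<in> hom term_model X Y" "g \<in> hom term_model Y Z"
  then show "Dar term_model (cmp term_model g f)
      = cmp term_model (Dar term_model g) (Dar term_model f)"
    by (auto elim!: term_model_homE simp: Dar_cmp_tm)
qed

lemma term_model_strength: "is_strength term_model"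
  unfolding is_strength_def
proof (intro conjI ballI allI impI)
  fix X Y assume "X \<in> Ob term_model" "Y \<in> Ob term_model"
  then obtain A B where "X = tm_ob A" "Y = tm_ob B" by (meson term_model_ObE)
  moreover have "typing [TyProd A (TyDia B)]
      (TLetmap (TSnd (TVar 0)) (TPair (TFst (TVar (Suc 0))) (TVar 0)))
      (TyDia (TyProd A B))"
    by (simp add: typing_simps)
  ultimately show "st term_model X Y \<in> hom term_model (prd term_model X (Dob term_model Y))
      (Dob term_model (prd term_model X Y))"
    by simp
next
  fix X X' Y Y' f g assume "f \<in> hom term_model X X'" "g \<in> hom term_model Y Y'"
  then obtain A A' p B B' q where "f = tm_ar A A' p" "X = tm_ob A" "X' = tm_ob A'"
    "g = tm_ar B B' q" "Y = tm_ob B" "Y' = tm_ob B'" and p: "typing [A] p A'" and q: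
        "typing [B] q B'"
    by (meson term_model_homE)
  then show "cmp term_model (st term_model X' Y')
      (parr term_model X (Dob term_model Y) f (Dar term_model g))
      = cmp term_model (Dar term_model (parr term_model X Y f g)) (st term_model X Y)"
    using st_nat_tm[OF p q] by simp
qed (auto elim!: term_model_ObE simp del: term_model_simps simp: st_unit_tm st_assoc_tm)

lemma term_model_multiplication: "is_strong_semimonad_mult term_model"
  unfolding is_strong_semimonad_mult_def
proof (intro conjI ballI allI impI)
  fix X assume "X \<in> Ob term_model"
  then obtain A where "X = tm_ob A" by (rule term_model_ObE)
  moreover have "typing [TyDia (TyDia A)] (TLet (TVar 0) (TVar 0)) (TyDia A)"
    by (simp add: typing_simps)
  ultimately show "mu term_model X \<in> hom term_model (Dob term_model (Dob term_model X))
      (Dob term_model X)"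
    by simp
next
  fix X Y f assume "f \<in> hom term_model X Y"
  then obtain A B p where "f = tm_ar A B p" "X = tm_ob A" "Y = tm_ob B" and p: "typing [A] p B"
    by (rule term_model_homE)
  then show "cmp term_model (mu term_model Y) (Dar term_model (Dar term_model f))
      = cmp term_model (Dar term_model f) (mu term_model X)"
    using mu_nat_tm[OF p] by simp
qed (auto elim!: term_model_ObE simp del: term_model_simps simp: mu_assoc_tm mu_st_tm)

lemma term_model_is_sj_model: "is_sj_model term_model"
  unfolding is_sj_model_def
  using term_model_category term_model_terminal term_model_products term_model_exponentials
    term_model_endofunctor term_model_strength term_model_multiplication by blast

section \<open>Completeness\<close>

fun ctx_ty :: "ty list \<Rightarrow> ty" where
  "ctx_ty [] = TyUnit"
| "ctx_ty (A # G) = TyProd (ctx_ty G) A"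

fun ctx_proj :: "ty list \<Rightarrow> nat \<Rightarrow> tm" where
  "ctx_proj (A # G) 0 = TSnd (TVar 0)"
| "ctx_proj (A # G) (Suc i) = subst 0 (TFst (TVar 0)) (ctx_proj G i)"
| "ctx_proj [] i = TVar 0"

fun ctx_tuple :: "ty list \<Rightarrow> tm" where
  "ctx_tuple [] = TUnit"
| "ctx_tuple (A # G) = TPair (ren Suc (ctx_tuple G)) (TVar 0)"

lemma ty_obj_term_model [simp]: "ty_obj term_model (tm_ob TyBase) A = tm_ob A"
  by (induction A) simp_all

lemma ctx_obj_term_model [simp]: "ctx_obj term_model (tm_ob TyBase) G = tm_ob (ctx_ty G)"
  by (induction G) simp_all

lemma typing_ctx_proj: "i < length G \<Longrightarrow> typing [ctx_ty G] (ctx_proj G i) (G ! i)"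
proof (induction G arbitrary: i)
  case (Cons A G)
  then show ?case by (cases i) (auto intro!: typing_compose simp: typing_simps)
qed simp

lemma typing_ctx_tuple: "typing G (ctx_tuple G) (ctx_ty G)"
  by (induction G) (simp_all add: typing_simps typing_weaken)

lemma typing_msubst_ctx_proj: "typing G t A \<Longrightarrow> typing [ctx_ty G] (msubst (ctx_proj G) t) A"
  using typing_msubst typing_ctx_proj by blast

lemma var_sem_term_model:
  "i < length G \<Longrightarrow> var_sem term_model (tm_ob TyBase) G i = tm_ar (ctx_ty G) (G ! i) (ctx_proj G i)"
proof (induction G arbitrary: i)
  case (Cons A G)
  have "typing [TyProd (ctx_ty G) A] (TFst (TVar 0)) (ctx_ty G)" by (simp add: typing_simps)
  with Cons show ?case by (cases i) (auto simp: cmp_tm_ar typing_ctx_proj)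
qed simp

lemma ctx_proj_pair_eqv:
  assumes i: "i < length (A # G)"
  shows "eqv [A, ctx_ty G] (subst 0 (TPair (TVar (Suc 0)) (TVar 0)) (ctx_proj (A # G) i))
    (up_subst (ctx_proj G) i) ((A # G) ! i)"
proof (cases i)
  case 0
  then show ?thesis
    using ax_snd_beta[of "[A, ctx_ty G]" "TVar (Suc 0)" "ctx_ty G" "TVar 0" A]
    by (simp add: typing_simps)
next
  case (Suc j)
  with i have j: "j < length G" by simp
  have "subst 0 (TPair (TVar (Suc 0)) (TVar 0)) (ctx_proj (A # G) i)
      = msubst (\<lambda>k. subst 0 (TPair (TVar (Suc 0)) (TVar 0)) (subst_var 0 (TFst (TVar 0)) k))
          (ctx_proj G j)"
    using Suc by (simp add: subst_eq_msubst msubst_msubst)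
  also have "eqv [A, ctx_ty G] \<dots> (msubst (TVar \<circ> Suc) (ctx_proj G j)) (G ! j)"
    by (rule eqv_msubst_single[OF typing_ctx_proj[OF j]]) (simp add: ax_fst_beta typing_simps)
  finally show ?thesis using Suc by (simp add: ren_eq_msubst comp_def)
qed

lemma msubst_ctx_proj_pair_eqv:
  assumes u: "typing (A # G) u B"
  shows "eqv [A, ctx_ty G] (subst 0 (TPair (TVar (Suc 0)) (TVar 0)) (msubst (ctx_proj (A # G)) u))
    (msubst (up_subst (ctx_proj G)) u) B"
  unfolding subst_eq_msubst[of 0] msubst_msubst
  by (rule eqv_msubst_pointwise[OF u]) (use ctx_proj_pair_eqv in \<open>auto simp: subst_eq_msubst\<close>)

lemma msubst_ctx_proj_closed_lam:
  assumes u: "typing (A # G) u B"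
  shows "eqv [A, ctx_ty G] (msubst (up_subst (ctx_proj G)) u)
    (TApp (closed_lam (TyProd (ctx_ty G) A) (msubst (ctx_proj (A # G)) u))
        (TPair (TVar (Suc 0)) (TVar 0))) B"
proof -
  have "eqv [A, ctx_ty G]
      (TApp (closed_lam (TyProd (ctx_ty G) A) (msubst (ctx_proj (A # G)) u))
          (TPair (TVar (Suc 0)) (TVar 0)))
      (subst 0 (TPair (TVar (Suc 0)) (TVar 0)) (msubst (ctx_proj (A # G)) u)) B"
    using typing_msubst_ctx_proj[OF u] by (intro closed_lam_beta) (simp_all add: typing_simps)
  then show ?thesis using msubst_ctx_proj_pair_eqv[OF u] by (blast intro: eq_sym eq_trans)
qed

lemma letmap_ar_term_model:
  assumes t: "typing [C] t (TyDia A)" and u: "typing [TyProd C A] u B"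
  shows "letmap_ar term_model (tm_ob C) (tm_ob A) (tm_ar (TyProd C A) B u) (tm_ar C (TyDia A) t)
    = tm_ar C (TyDia B) (TLetmap (TApp (closed_lam C t) (TVar 0))
        (TApp (closed_lam (TyProd C A) u) (TPair (TVar (Suc 0)) (TVar 0))))"
  unfolding letmap_ar_def tm_ar_closed_lam[OF t] tm_ar_closed_lam[OF u] using t u
  by (simp add: typing_simps Dar_tm_ar cmp_tm_ar tup_tm_ar)
     (rule tm_ar_eq_by_norm[where n = 8]; simp add: typing_simps)

lemma let_ar_term_model:
  assumes t: "typing [C] t (TyDia A)" and u: "typing [TyProd C A] u (TyDia B)"
  shows "cmp term_model (mu term_model (tm_ob B))
      (letmap_ar term_model (tm_ob C) (tm_ob A) (tm_ar (TyProd C A) (TyDia B) u)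
          (tm_ar C (TyDia A) t))
    = tm_ar C (TyDia B) (TLet (TApp (closed_lam C t) (TVar 0))
        (TApp (closed_lam (TyProd C A) u) (TPair (TVar (Suc 0)) (TVar 0))))"
  unfolding letmap_ar_def tm_ar_closed_lam[OF t] tm_ar_closed_lam[OF u] using t u
  by (simp add: typing_simps Dar_tm_ar cmp_tm_ar tup_tm_ar)
     (rule tm_ar_eq_by_norm[where n = 8]; simp add: typing_simps)

lemma sem_term_model:
  "typing G t A \<Longrightarrow> sem term_model (tm_ob TyBase) G t = tm_ar (ctx_ty G) A (msubst (ctx_proj G) t)"
proof (induction rule: typing.induct)
  interpret term_model: sj_interpretation term_model "tm_ob TyBase"
    by unfold_locales (simp_all add: term_model_is_sj_model)
  {
    case (ty_var i \<Gamma>)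
    then show ?case by (simp add: var_sem_term_model)
  next
    case (ty_pair \<Gamma> t A u B)
    then show ?case by (simp add: tup_tm_ar typing_msubst_ctx_proj)
  next
    case (ty_fst \<Gamma> t A B)
    have "typing [TyProd A B] (TFst (TVar 0)) A" by (simp add: typing_simps)
    with ty_fst show ?case by (simp add: tyof_eq cmp_tm_ar typing_msubst_ctx_proj)
  next
    case (ty_snd \<Gamma> t A B)
    have "typing [TyProd A B] (TSnd (TVar 0)) B" by (simp add: typing_simps)
    with ty_snd show ?case by (simp add: tyof_eq cmp_tm_ar typing_msubst_ctx_proj)
  next
    case (ty_lam A \<Gamma> t B)
    have "eqv [ctx_ty \<Gamma>]
        (TLam A (subst 0 (TPair (TVar (Suc 0)) (TVar 0)) (msubst (ctx_proj (A # \<Gamma>)) t)))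
        (TLam A (msubst (up_subst (ctx_proj \<Gamma>)) t)) (TyArr A B)"
      by (rule cg_lam[OF msubst_ctx_proj_pair_eqv[OF ty_lam(1)]])
    with ty_lam show ?case
      using cur_tm_ar[of "ctx_ty \<Gamma>" A "msubst (ctx_proj (A # \<Gamma>)) t" B]
          typing_msubst_ctx_proj[OF ty_lam(1)]
      by (simp add: tm_ar_eqI)
  next
    case (ty_app \<Gamma> t A B u)
    let ?t = "msubst (ctx_proj \<Gamma>) t" and ?u = "msubst (ctx_proj \<Gamma>) u"
    have t: "typing [ctx_ty \<Gamma>] ?t (TyArr A B)" and u: "typing [ctx_ty \<Gamma>] ?u A"
      using ty_app by (simp_all add: typing_msubst_ctx_proj)
    have "typing [TyProd (TyArr A B) A] (TApp (TFst (TVar 0)) (TSnd (TVar 0))) B"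
        by (simp add: typing_simps)
    moreover have "eqv [ctx_ty \<Gamma>] (TApp (TFst (TPair ?t ?u)) (TSnd (TPair ?t ?u))) (TApp ?t ?u) B"
      by (rule cg_app[OF ax_fst_beta[OF t u] ax_snd_beta[OF t u]])
    ultimately show ?case
      using ty_app t u by (simp add: tyof_eq tup_tm_ar cmp_tm_ar ty_pair tm_ar_eqI)
  next
    case (ty_letmap \<Gamma> t A u B)
    let ?t = "msubst (ctx_proj \<Gamma>) t" and ?u = "msubst (ctx_proj (A # \<Gamma>)) u"
    have t: "typing [ctx_ty \<Gamma>] ?t (TyDia A)" and u: "typing [TyProd (ctx_ty \<Gamma>) A] ?u B"
      using ty_letmap typing_msubst_ctx_proj by fastforce+
    have "eqv [ctx_ty \<Gamma>] (msubst (ctx_proj \<Gamma>) (TLetmap t u))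
        (TLetmap (TApp (closed_lam (ctx_ty \<Gamma>) ?t) (TVar 0))
          (TApp (closed_lam (TyProd (ctx_ty \<Gamma>) A) ?u) (TPair (TVar (Suc 0)) (TVar 0)))) (TyDia B)"
      unfolding msubst.simps
      by (rule cg_letmap[OF closed_lam_var_eqv[OF t] msubst_ctx_proj_closed_lam[OF ty_letmap(2)]])
    then show ?case
      unfolding term_model.sem_TLetmap[OF ty_letmap(1)] ty_letmap.IH ty_obj_term_model
          ctx_obj_term_model ctx_ty.simps
        letmap_ar_term_model[OF t u]
      by (rule tm_ar_eqI[OF eq_sym])
  next
    case (ty_let \<Gamma> t A u B)
    let ?t = "msubst (ctx_proj \<Gamma>) t" and ?u = "msubst (ctx_proj (A # \<Gamma>)) u"
    have t: "typing [ctx_ty \<Gamma>] ?t (TyDia A)" and u: "typing [TyProd (ctx_ty \<Gamma>) A] ?u (TyDia B)"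
      using ty_let typing_msubst_ctx_proj by fastforce+
    have "eqv [ctx_ty \<Gamma>] (msubst (ctx_proj \<Gamma>) (TLet t u))
        (TLet (TApp (closed_lam (ctx_ty \<Gamma>) ?t) (TVar 0))
          (TApp (closed_lam (TyProd (ctx_ty \<Gamma>) A) ?u) (TPair (TVar (Suc 0)) (TVar 0)))) (TyDia B)"
      unfolding msubst.simps
      by (rule cg_let[OF closed_lam_var_eqv[OF t] msubst_ctx_proj_closed_lam[OF ty_let(2)]])
    then show ?case
      unfolding term_model.sem_TLet[OF ty_let(1,2)] ty_let.IH ty_obj_term_model
          ctx_obj_term_model ctx_ty.simps
        let_ar_term_model[OF t u]
      by (rule tm_ar_eqI[OF eq_sym])
  }
qed simp_all

lemma ctx_tuple_ctx_proj_eqv: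
  "i < length G \<Longrightarrow> eqv G (subst 0 (ctx_tuple G) (ctx_proj G i)) (TVar i) (G ! i)"
proof (induction G arbitrary: i)
  case (Cons A G)
  have tw: "typing (A # G) (ren Suc (ctx_tuple G)) (ctx_ty G)"
      by (rule typing_weaken[OF typing_ctx_tuple])
  have v0: "typing (A # G) (TVar 0) A" by (simp add: typing_simps)
  show ?case
  proof (cases i)
    case 0
    then show ?thesis using ax_snd_beta[OF tw v0] by simp
  next
    case (Suc j)
    with Cons have j: "j < length G" by simp
    have "subst 0 (ctx_tuple (A # G)) (ctx_proj (A # G) i)
        = msubst (\<lambda>k. subst 0 (ctx_tuple (A # G)) (subst_var 0 (TFst (TVar 0)) k)) (ctx_proj G j)"
      using Suc by (simp add: subst_eq_msubst msubst_msubst)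
    also have "eqv (A # G) \<dots> (msubst (ren Suc \<circ> subst_var 0 (ctx_tuple G)) (ctx_proj G j)) (G ! j)"
      by (rule eqv_msubst_single[OF typing_ctx_proj[OF j]]) (simp add: ax_fst_beta[OF tw v0])
    also have "msubst (ren Suc \<circ> subst_var 0 (ctx_tuple G)) (ctx_proj G j)
        = ren Suc (subst 0 (ctx_tuple G) (ctx_proj G j))"
      by (simp add: ren_msubst subst_eq_msubst)
    also have "eqv (A # G) \<dots> (ren Suc (TVar j)) (G ! j)"
      by (rule eqv_weaken[OF Cons.IH[OF j]])
    finally show ?thesis using Suc by simp
  qed
qed simp

lemma ctx_tuple_msubst_ctx_proj_eqv:
  assumes "typing G t A"
  shows "eqv G (subst 0 (ctx_tuple G) (msubst (ctx_proj G) t)) t A"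
proof -
  have "eqv G (msubst (\<lambda>i. subst 0 (ctx_tuple G) (ctx_proj G i)) t) (msubst TVar t) A"
    by (rule eqv_msubst_pointwise[OF assms]) (simp add: ctx_tuple_ctx_proj_eqv)
  then show ?thesis by (simp add: subst_eq_msubst msubst_msubst)
qed

lemma eqv_if_sem_term_model_eq:
  assumes t: "typing G t A" and u: "typing G u A"
    and sem_eq: "sem term_model (tm_ob TyBase) G t = sem term_model (tm_ob TyBase) G u"
  shows "eqv G t u A"
proof -
  have "eqv [ctx_ty G] (msubst (ctx_proj G) t) (msubst (ctx_proj G) u) A"
    using sem_eq sem_term_model[OF t] sem_term_model[OF u]
      tm_ar_eq_iff[OF typing_msubst_ctx_proj[OF t] typing_msubst_ctx_proj[OF u]] by simp
  then have "eqv G (subst 0 (ctx_tuple G) (msubst (ctx_proj G) t))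
      (subst 0 (ctx_tuple G) (msubst (ctx_proj G) u)) A"
    by (rule eqv_compose[OF _ eq_refl[OF typing_ctx_tuple]])
  then show ?thesis
    using ctx_tuple_msubst_ctx_proj_eqv[OF t] ctx_tuple_msubst_ctx_proj_eqv[OF u]
    by (blast intro: eq_sym eq_trans)
qed

theorem proposition3p3:
  fixes \<Gamma> :: "ty list" and t u :: tm and A :: ty
  assumes "typing \<Gamma> t A" and "typing \<Gamma> u A"
  shows "(eqv \<Gamma> t u A \<longrightarrow>
            (\<forall>(M :: ('o, 'm) sj_model) \<iota>. is_sj_model M \<and> \<iota> \<in> Ob M \<longrightarrow>
               sem M \<iota> \<Gamma> t = sem M \<iota> \<Gamma> u))
       \<and> ((\<forall>(M :: (nat, nat) sj_model) \<iota>. is_sj_model M \<and> \<iota> \<in> Ob M \<longrightarrow>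
               sem M \<iota> \<Gamma> t = sem M \<iota> \<Gamma> u)
            \<longrightarrow> eqv \<Gamma> t u A)"
proof (intro conjI impI allI)
  fix M :: "('o, 'm) sj_model" and \<iota>
  assume "eqv \<Gamma> t u A" and "is_sj_model M \<and> \<iota> \<in> Ob M"
  then show "sem M \<iota> \<Gamma> t = sem M \<iota> \<Gamma> u"
    by (simp add: sj_interpretation.sem_eqv sj_interpretation_def strong_semimonad_ccc_def
        sj_interpretation_axioms_def)
next
  assume "\<forall>(M :: (nat, nat) sj_model) \<iota>. is_sj_model M \<and> \<iota> \<in> Ob M \<longrightarrow> sem M \<iota> \<Gamma> t = sem M \<iota> \<Gamma> u"
  then have "sem term_model (tm_ob TyBase) \<Gamma> t = sem term_model (tm_ob TyBase) \<Gamma> u"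
    using term_model_is_sj_model by simp
  then show "eqv \<Gamma> t u A" using eqv_if_sem_term_model_eq assms by blast
qed

end
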